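(* Let $\varphi\in(\tfrac12,1)$ be irrational and $1<\alpha\le2$. Let $\mathcal{S}=\bigcup_{n\in\mathbb{N},\,n\ge1,\ \varphi-1/n>0}\mathcal{S}_{\varphi-\frac1n}$, where $\mathcal{S}_\psi$ denotes the set of Sturmian words generated by $\psi$. If $X$ is a Sturmian word generated by $\varphi$, then $X$ is stable with respect to $\mathcal{S}$ for the Hamiltonian $H_\alpha$; that is, for every finite set $P$ of patterns there exists $\lambda>0$ such that for every $(\lambda,P)$-perturbation $\widetilde H$ of $H_\alpha$ we have $\rho_{\widetilde H}(X)\le\rho_{\widetilde H}(W)$ for all $W\in\mathcal{S}$.
   Context: Circle $=\mathbb{R}/\mathbb{Z}$. For irrational $\psi$, $X\in\{0,1\}^{\mathbb{Z}}$ is a Sturmian word generated by $\psi$ if there are $x\in\mathbb{R}/\mathbb{Z}$ and $P_0\in\{[0,\psi),(0,\psi]\}$ with $X(n)=0$ if $x+n\psi\in P_0$ and $X(n)=1$ otherwise. Forbidden distances: $F=\{k\in\mathbb{N}: k\varphi \bmod 1\in[1-\varphi,\varphi]\}$. Fix $m\in\mathbb{N}$ such that the sequences in $\{0,1\}^{\mathbb{Z}}$ containing no $m$ consecutive $0$'s and no two $1$'s at a distance in $F$ are exactly the Sturmian words generated by $\varphi$ (such $m$ exists). A pattern is a configuration in $\{0,1\}^A$ on a finite set $A\subset\mathbb{Z}$, up to translation. A Hamiltonian is given by energies $\Phi$ on patterns; for a finite segment $w$, $H(w)$ is the sum of $\Phi(p)$ over all occurrences of patterns $p$ in $w$. $H_\alpha$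 assigns energy $1/n^\alpha$ to the pattern of two $1$'s at distance $n$ for each $n\in F$, energy $1$ to the pattern of $m$ consecutive $0$'s, and $0$ to all other patterns. Energy density: $\rho_H(X)=\liminf_{k\to\infty}\frac{H(X([-k,k]))}{2k+1}$. For a finite set of patterns $P$ and $\lambda>0$, $\widetilde H$ (energies $\widetilde\Phi$) is a $(\lambda,P)$-perturbation of $H$ (energies $\Phi$) if $|\Phi(p)-\widetilde\Phi(p)|<\lambda$ for $p\in P$ and $\Phi(q)=\widetilde\Phi(q)$ for $q\notin P$. *)

theory Defs
  imports "HOL-Analysis.Analysis" "HOL-Library.Liminf_Limsup"
begin

text \<open>Bi-infinite 0/1 sequences are modelled as functions int => nat (values 0 and 1).
A pattern (configuration on a finite set A of integers, up to translation) is represented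
in normal form as a partial map int => nat option whose domain is the translate of A
with minimum 0.\<close>

type_synonym pattern = "int \<Rightarrow> nat option"

definition sturmian :: "real \<Rightarrow> (int \<Rightarrow> nat) \<Rightarrow> bool" where
  "sturmian \<psi> X \<longleftrightarrow> (\<exists>x::real.
      (\<forall>n. X n = (if frac (x + of_int n * \<psi>) \<in> {0..<\<psi>} then 0 else 1)) \<or>
      (\<forall>n. X n = (if frac (x + of_int n * \<psi>) \<in> {0<..\<psi>} then 0 else 1)))"

definition forbidden :: "real \<Rightarrow> nat set" where
  "forbidden \<phi> = {k. k \<ge> 1 \<and> frac (real k * \<phi>) \<in> {1 - \<phi> .. \<phi>}}"

definition no_m_zeros :: "nat \<Rightarrow> (int \<Rightarrow> nat) \<Rightarrow> bool" where
  "no_m_zeros m X \<longleftrightarrow> \<not> (\<exists>t. \<forall>i<m. X (t + int i) = 0)"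

definition no_forbidden_ones :: "real \<Rightarrow> (int \<Rightarrow> nat) \<Rightarrow> bool" where
  "no_forbidden_ones \<phi> X \<longleftrightarrow> (\<forall>s. \<forall>n\<in>forbidden \<phi>. \<not> (X s = 1 \<and> X (s + int n) = 1))"

definition pattern_of :: "(int \<Rightarrow> nat) \<Rightarrow> int set \<Rightarrow> pattern" where
  "pattern_of X A = (\<lambda>i. if i + Min A \<in> A then Some (X (i + Min A)) else None)"

definition two_ones :: "nat \<Rightarrow> pattern" where
  "two_ones n = (\<lambda>i. if i = 0 \<or> i = int n then Some 1 else None)"

definition zeros_pat :: "nat \<Rightarrow> pattern" where
  "zeros_pat m = (\<lambda>i. if 0 \<le> i \<and> i < int m then Some 0 else None)"

definition H_alpha :: "real \<Rightarrow> nat \<Rightarrow> real \<Rightarrow> pattern \<Rightarrow> real" where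
  "H_alpha \<phi> m \<alpha> p =
     (if p = zeros_pat m then 1
      else if (\<exists>n\<in>forbidden \<phi>. p = two_ones n)
        then 1 / (real (THE n. n \<in> forbidden \<phi> \<and> p = two_ones n)) powr \<alpha>
      else 0)"

text \<open>An occurrence is determined by its (nonempty) support A inside the segment, and the
pattern occurring there is pattern_of X A.\<close>
definition seg_energy :: "(pattern \<Rightarrow> real) \<Rightarrow> (int \<Rightarrow> nat) \<Rightarrow> nat \<Rightarrow> real" where
  "seg_energy \<Phi> X k = (\<Sum>A\<in>{A. A \<subseteq> {- int k .. int k} \<and> A \<noteq> {}}. \<Phi> (pattern_of X A))"

definition energy_density :: "(pattern \<Rightarrow> real) \<Rightarrow> (int \<Rightarrow> nat) \<Rightarrow> ereal" where
  "energy_density \<Phi> X =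
     Liminf sequentially (\<lambda>k. ereal (seg_energy \<Phi> X k / (2 * real k + 1)))"

definition perturbation :: "real \<Rightarrow> pattern set \<Rightarrow> (pattern \<Rightarrow> real) \<Rightarrow> (pattern \<Rightarrow> real) \<Rightarrow> bool" where
  "perturbation lam P \<Phi> \<Phi>' \<longleftrightarrow>
     (\<forall>p\<in>P. \<bar>\<Phi> p - \<Phi>' p\<bar> < lam) \<and> (\<forall>q. q \<notin> P \<longrightarrow> \<Phi> q = \<Phi>' q)"

end

theory Submission
  imports Defs
begin

text \<open>
  The word \<open>X\<close> codes the rotation by \<open>\<phi>\<close>, so it carries no \<open>H\<^sub>\<alpha>\<close>-energy, and each pattern
  occurs in it with a frequency: the measure of the set of points of the circle whose \<open>\<phi>\<close>-coding
  starts with that pattern, a finite union of arcs. Hence a perturbation supported on \<open>P\<close> gives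
  \<open>X\<close> the density \<open>\<Sum>\<^sub>p \<delta>\<^sub>p f(p)\<close>.

  A Sturmian word \<open>W\<close> of slope \<open>\<psi> = \<phi> - 1/n\<close> is the \<open>\<psi>\<close>-coding of an orbit of the rotation by
  \<open>\<psi>\<close>. Along that orbit the \<open>\<psi>\<close>-coding and the \<open>\<phi>\<close>-coding of a point differ on a pattern only
  if the point is \<open>O(1/n)\<close>-close to finitely many discontinuities, and by unique ergodicity the
  \<open>\<phi>\<close>-codings have the same frequencies along any irrational rotation. So the perturbation gives
  \<open>W\<close> at least \<open>\<Sum>\<^sub>p \<delta>\<^sub>p f(p) - O(\<lambda>/n)\<close>. On the other hand \<open>W\<close> pays \<open>H\<^sub>\<alpha>\<close>-energy: there
  are \<open>\<ge> c n\<close> forbidden distances \<open>d \<in> [n, 2n)\<close> with \<open>d \<psi>\<close> close to an integer, and for each of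
  them a fixed proportion of the sites carries a pair of \<open>1\<close>'s at distance \<open>d\<close>; since
  \<open>\<alpha> \<le> 2\<close> this costs \<open>\<ge> c' / n\<close> per site. Choosing \<open>\<lambda>\<close> small makes this dominate.
\<close>

section \<open>Equidistribution of irrational rotations\<close>

lemma real_less_iff_less_nat_ceiling: "real j < r \<longleftrightarrow> j < nat \<lceil>r\<rceil>"
proof -
  have "real j < r \<longleftrightarrow> int j < \<lceil>r\<rceil>" using less_ceiling_iff[of "int j" r] by simp
  also have "\<dots> \<longleftrightarrow> j < nat \<lceil>r\<rceil>" by (simp add: zless_nat_eq_int_zless)
  finally show ?thesis .
qed

lemma card_less_real_eq: "card {j. j < J \<and> real j < r} = min J (nat \<lceil>r\<rceil>)"
proof -
  have "{j. j < J \<and> real j < r} = {..<min J (nat \<lceil>r\<rceil>)}"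
    by (auto simp: real_less_iff_less_nat_ceiling)
  then show ?thesis by simp
qed

lemma card_less_real_bounds:
  fixes r :: real and J :: nat
  shows "min (real J) r \<le> real (card {j. j < J \<and> real j < r})"
    and "real (card {j. j < J \<and> real j < r}) \<le> min (real J) (max 0 (r + 1))"
proof -
  have c: "real (card {j. j < J \<and> real j < r}) = min (real J) (real (nat \<lceil>r\<rceil>))"
    by (simp add: card_less_real_eq)
  have "r \<le> real (nat \<lceil>r\<rceil>)"
  proof (cases "\<lceil>r\<rceil> \<le> 0")
    case True then show ?thesis using le_of_int_ceiling[of r] by simp
  next
    case False then show ?thesis using le_of_int_ceiling[of r] by simp
  qed
  moreover have "real (nat \<lceil>r\<rceil>) \<le> max 0 (r + 1)"
  proof (cases "\<lceil>r\<rceil> \<le> 0")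
    case True then show ?thesis by simp
  next
    case False
    then have "real (nat \<lceil>r\<rceil>) = of_int \<lceil>r\<rceil>" by simp
    also have "\<dots> \<le> r + 1" using ceiling_correct[of r] by linarith
    finally show ?thesis by simp
  qed
  ultimately show "min (real J) r \<le> real (card {j. j < J \<and> real j < r})"
    and "real (card {j. j < J \<and> real j < r}) \<le> min (real J) (max 0 (r + 1))"
    unfolding c by linarith+
qed

lemma frac_less_iff_below_2:
  fixes y b :: real
  assumes "0 \<le> y" "y < 2"
  shows "frac y < b \<longleftrightarrow> y < b \<or> (1 \<le> y \<and> y < 1 + b)"
proof (cases "y < 1")
  case True
  then show ?thesis using assms by (simp add: frac_eq)
next
  case False
  then have "frac y = y - 1" using assms by (subst frac_unique_iff) auto
  then show ?thesis using False by auto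
qed

lemma card_progression_frac_less_eq:
  fixes \<eta> s b :: real and J :: nat
  assumes eta: "\<eta> > 0" and J1: "real J * \<eta> \<le> 1" and s: "0 \<le> s" "s < 1" and b: "0 \<le> b" "b \<le> 1"
  shows "real (card {j. j < J \<and> frac (s + real j * \<eta>) < b})
    = real (card {j. j < J \<and> real j < (b - s) / \<eta>}) + real (card {j. j < J \<and> real j < (1 + b - s) / \<eta>})
      - real (card {j. j < J \<and> real j < (1 - s) / \<eta>})"
proof -
  have lt_iff: "s + real j * \<eta> < y \<longleftrightarrow> real j < (y - s) / \<eta>" for j y
    using eta by (simp add: field_simps)
  have fr: "frac (s + real j * \<eta>) < b \<longleftrightarrow>
      s + real j * \<eta> < b \<or> (1 \<le> s + real j * \<eta> \<and> s + real j * \<eta> < 1 + b)"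
    if "j < J" for j
  proof (rule frac_less_iff_below_2)
    have "real j * \<eta> < real J * \<eta>" using that eta by simp
    then show "s + real j * \<eta> < 2" using J1 s by linarith
    show "0 \<le> s + real j * \<eta>" using s eta by simp
  qed
  define A where "A = {j. j < J \<and> real j < (b - s) / \<eta>}"
  define B where "B = {j. j < J \<and> real j < (1 + b - s) / \<eta>}"
  define C where "C = {j. j < J \<and> real j < (1 - s) / \<eta>}"
  have "frac (s + real j * \<eta>) < b \<longleftrightarrow>
      real j < (b - s) / \<eta> \<or> (\<not> real j < (1 - s) / \<eta> \<and> real j < (1 + b - s) / \<eta>)"
    if "j < J" for j
  proof -
    have "1 \<le> s + real j * \<eta> \<longleftrightarrow> \<not> real j < (1 - s) / \<eta>"
      using lt_iff[of j 1] by (meson not_less)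
    then show ?thesis by (simp only: fr[OF that] lt_iff)
  qed
  then have "{j. j < J \<and> frac (s + real j * \<eta>) < b} = A \<union> (B - C)"
    unfolding A_def B_def C_def by auto
  moreover have "A \<inter> (B - C) = {}" "C \<subseteq> B"
    using b eta divide_right_mono[of "b - s" "1 - s" \<eta>] divide_right_mono[of "1 - s" "1 + b - s" \<eta>]
    unfolding A_def B_def C_def by auto
  moreover have fin: "finite A" "finite B" "finite C" unfolding A_def B_def C_def by auto
  moreover have "card C \<le> card B" using \<open>C \<subseteq> B\<close> fin by (simp add: card_mono)
  ultimately show ?thesis unfolding A_def B_def C_def by (simp add: card_Un_disjoint card_Diff_subset)
qed

text \<open>A progression of step \<open>\<eta>\<close> and length \<open>J \<approx> 1/\<eta>\<close> wraps around the circle at most once,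
  so it meets \<open>[0,b)\<close> about \<open>b J\<close> times.\<close>

lemma progression_count_frac_less:
  fixes \<eta> s b :: real and J :: nat
  assumes eta: "\<eta> > 0" and J1: "real J * \<eta> \<le> 1" and J2: "real J * \<eta> > 1 - \<eta>"
    and s: "0 \<le> s" "s < 1" and b: "0 \<le> b" "b \<le> 1"
  shows "\<bar>real (card {j. j < J \<and> frac (s + real j * \<eta>) < b}) - b * real J\<bar> \<le> 4"
proof -
  define A where "A = {j. j < J \<and> real j < (b - s) / \<eta>}"
  define B where "B = {j. j < J \<and> real j < (1 + b - s) / \<eta>}"
  define C where "C = {j. j < J \<and> real j < (1 - s) / \<eta>}"
  have eq: "real (card {j. j < J \<and> frac (s + real j * \<eta>) < b}) = real (card A) + real (card B) - real (card C)"
    unfolding A_def B_def C_def by (rule card_progression_frac_less_eq[OF eta J1 s b])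
  have "C \<subseteq> B"
    using b eta divide_right_mono[of "1 - s" "1 + b - s" \<eta>] unfolding B_def C_def by auto
  then have BC: "real (card C) \<le> real (card B)" by (simp add: B_def card_mono)
  define t where "t = 1 / \<eta>"
  define BB where "BB = b * t"
  define SS where "SS = s * t"
  have e: "(b - s) / \<eta> = BB - SS" "(1 + b - s) / \<eta> = t + BB - SS" "(1 - s) / \<eta> = t - SS"
    using eta by (simp_all add: BB_def SS_def t_def diff_divide_distrib add_divide_distrib)
  have t: "t > 0" using eta by (simp add: t_def)
  have Jt: "real J \<le> t" "t - 1 < real J"
    using J1 J2 eta by (simp_all add: t_def field_simps)
  have SS: "0 \<le> SS" "SS < t" using s t by (simp_all add: SS_def)
  have BB: "0 \<le> BB" "BB \<le> t" using b t by (simp_all add: BB_def)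
  have bJ: "BB - 1 \<le> b * real J" "b * real J \<le> BB"
  proof -
    have "b * real J \<le> b * t" using Jt b by (simp add: mult_left_mono)
    then show "b * real J \<le> BB" by (simp add: BB_def)
    have "b * (t - 1) \<le> b * real J" using Jt b by (simp add: mult_left_mono)
    moreover have "b * (t - 1) \<ge> BB - 1" using b by (simp add: BB_def algebra_simps)
    ultimately show "BB - 1 \<le> b * real J" by linarith
  qed
  have A: "min (real J) (BB - SS) \<le> real (card A)" "real (card A) \<le> min (real J) (max 0 (BB - SS + 1))"
    using card_less_real_bounds[of J "BB - SS"] unfolding A_def e by simp_all
  have B: "min (real J) (t + BB - SS) \<le> real (card B)" "real (card B) \<le> min (real J) (max 0 (t + BB - SS + 1))"
    using card_less_real_bounds[of J "t + BB - SS"] unfolding B_def e by simp_all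
  have C: "min (real J) (t - SS) \<le> real (card C)" "real (card C) \<le> min (real J) (max 0 (t - SS + 1))"
    using card_less_real_bounds[of J "t - SS"] unfolding C_def e by simp_all
  have "real (card A) + real (card B) - real (card C) \<le> b * real J + 4"
    using A(2) B(2) C(1) bJ Jt SS BB by (auto simp: min_def max_def split: if_splits)
  moreover have "real (card A) + real (card B) - real (card C) \<ge> b * real J - 4"
    using A(1) B(1) C(2) BC bJ Jt SS BB by (auto simp: min_def max_def split: if_splits)
  ultimately show ?thesis unfolding eq by linarith
qed

lemma frac_add_frac: "frac (frac s + y) = frac (s + y)"
  by (metis add.commute add.left_commute frac_add_of_int_right frac_def diff_add_cancel)

lemma progression_count_frac_interval:
  fixes \<eta> s a b :: real and J :: nat
  assumes eta: "\<eta> > 0" and J1: "real J * \<eta> \<le> 1" and J2: "real J * \<eta> > 1 - \<eta>"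
    and ab: "0 \<le> a" "a \<le> b" "b \<le> 1"
  shows "\<bar>real (card {j. j < J \<and> frac (s + real j * \<eta>) \<in> {a..<b}}) - (b - a) * real J\<bar> \<le> 8"
proof -
  define Sb where "Sb = {j. j < J \<and> frac (frac s + real j * \<eta>) < b}"
  define Sa where "Sa = {j. j < J \<and> frac (frac s + real j * \<eta>) < a}"
  have "{j. j < J \<and> frac (s + real j * \<eta>) \<in> {a..<b}} = Sb - Sa"
    unfolding Sa_def Sb_def by (auto simp: frac_add_frac)
  moreover have "Sa \<subseteq> Sb" "finite Sb" using ab unfolding Sa_def Sb_def by auto
  ultimately have c: "real (card {j. j < J \<and> frac (s + real j * \<eta>) \<in> {a..<b}})
      = real (card Sb) - real (card Sa)"
    by (simp add: card_Diff_subset card_mono finite_subset of_nat_diff)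
  have s: "0 \<le> frac s" "frac s < 1" by (auto simp: frac_lt_1)
  have "\<bar>real (card Sb) - b * real J\<bar> \<le> 4" "\<bar>real (card Sa) - a * real J\<bar> \<le> 4"
    unfolding Sa_def Sb_def using ab
    by (intro progression_count_frac_less[OF eta J1 J2 s]; simp)+
  then show ?thesis unfolding c abs_le_iff by (simp add: algebra_simps)
qed

definition rotation_hits :: "real \<Rightarrow> real \<Rightarrow> real \<Rightarrow> real \<Rightarrow> nat \<Rightarrow> real" where
  "rotation_hits \<beta> x a b M = (\<Sum>t<M. of_bool (frac (x + real t * \<beta>) \<in> {a..<b}))"

lemma sum_lessThan_add: "(\<Sum>t<M + N. f t) = (\<Sum>t<M. f t) + (\<Sum>u<N. f (M + u))"
  for f :: "nat \<Rightarrow> 'a::comm_monoid_add"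
  by (induction N) (simp_all add: add.assoc)

lemma sum_lessThan_mult: "(\<Sum>t<J * q. f t) = (\<Sum>j<J. \<Sum>r<q. f (j * q + r))"
  for f :: "nat \<Rightarrow> 'a::comm_monoid_add"
proof (induction J)
  case (Suc J)
  have "(\<Sum>t<Suc J * q. f t) = (\<Sum>t<J * q + q. f t)" by (simp add: add.commute)
  then show ?case by (simp add: sum_lessThan_add Suc.IH)
qed simp

lemma rotation_hits_nonneg: "0 \<le> rotation_hits \<beta> x a b M"
  unfolding rotation_hits_def by (simp add: sum_nonneg)

lemma rotation_hits_le: "rotation_hits \<beta> x a b M \<le> real M"
proof -
  have "rotation_hits \<beta> x a b M \<le> (\<Sum>t<M. 1)"
    unfolding rotation_hits_def by (intro sum_mono) simp
  then show ?thesis by simp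
qed

lemma rotation_hits_add:
  "rotation_hits \<beta> x a b (M + N) = rotation_hits \<beta> x a b M + rotation_hits \<beta> (x + real M * \<beta>) a b N"
  unfolding rotation_hits_def sum_lessThan_add by (simp add: algebra_simps)

text \<open>If \<open>q \<beta>\<close> is a small positive number mod 1, the first \<open>J q\<close> points split into \<open>q\<close>
  progressions of step \<open>frac (q \<beta>)\<close> and length \<open>J\<close>.\<close>

lemma rotation_hits_block:
  fixes \<beta> x a b \<eta> :: real and q J :: nat
  assumes eta: "frac (real q * \<beta>) = \<eta>" "\<eta> > 0"
    and J1: "real J * \<eta> \<le> 1" and J2: "real J * \<eta> > 1 - \<eta>"
    and ab: "0 \<le> a" "a \<le> b" "b \<le> 1"
  shows "\<bar>rotation_hits \<beta> x a b (J * q) - (b - a) * real (J * q)\<bar> \<le> 8 * real q"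
proof -
  have shift: "frac (x + real (j * q + r) * \<beta>) = frac ((x + real r * \<beta>) + real j * \<eta>)" for j r
  proof -
    have h: "real q * \<beta> = \<eta> + of_int \<lfloor>real q * \<beta>\<rfloor>" using eta(1) by (simp add: frac_def)
    have "x + real (j * q + r) * \<beta> = (x + real r * \<beta>) + real j * (real q * \<beta>)"
      by (simp add: algebra_simps)
    also have "\<dots> = (x + real r * \<beta>) + real j * \<eta> + of_int (int j * \<lfloor>real q * \<beta>\<rfloor>)"
      by (subst h) (simp add: algebra_simps)
    finally have "x + real (j * q + r) * \<beta> = \<dots>" .
    then show ?thesis by (metis frac_add_of_int_right)
  qed
  have "rotation_hits \<beta> x a b (J * q)
      = (\<Sum>r<q. \<Sum>j<J. of_bool (frac ((x + real r * \<beta>) + real j * \<eta>) \<in> {a..<b}))"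
    unfolding rotation_hits_def sum_lessThan_mult shift by (rule sum.swap)
  also have "\<dots> = (\<Sum>r<q. real (card {j. j < J \<and> frac ((x + real r * \<beta>) + real j * \<eta>) \<in> {a..<b}}))"
    by (simp add: Int_def conj_commute)
  finally have c: "rotation_hits \<beta> x a b (J * q) = \<dots>" .
  have "\<bar>(\<Sum>r<q. real (card {j. j < J \<and> frac ((x + real r * \<beta>) + real j * \<eta>) \<in> {a..<b}}))
        - (\<Sum>r<q. (b - a) * real J)\<bar> \<le> (\<Sum>r<q. 8)"
    unfolding sum_subtractf[symmetric]
    by (rule order_trans[OF sum_abs sum_mono]) (rule progression_count_frac_interval[OF eta(2) J1 J2 ab])
  then show ?thesis unfolding c by (simp add: algebra_simps)
qed

lemma rotation_hits_blocks:
  assumes "\<And>x. \<bar>rotation_hits \<beta> x a b L - (b - a) * real L\<bar> \<le> E"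
  shows "\<bar>rotation_hits \<beta> x a b (Q * L) - (b - a) * real (Q * L)\<bar> \<le> real Q * E"
proof (induction Q arbitrary: x)
  case 0
  then show ?case by (simp add: rotation_hits_def)
next
  case (Suc Q)
  have e: "rotation_hits \<beta> x a b (Suc Q * L)
      = rotation_hits \<beta> x a b (Q * L) + rotation_hits \<beta> (x + real (Q * L) * \<beta>) a b L"
  proof -
    have "Suc Q * L = Q * L + L" by simp
    then show ?thesis by (simp only: rotation_hits_add)
  qed
  have "(b - a) * real (Suc Q * L) = (b - a) * real (Q * L) + (b - a) * real L"
    by (simp add: algebra_simps)
  then show ?case
    using Suc.IH[of x] assms[of "x + real (Q * L) * \<beta>"] unfolding e abs_le_iff
    by (simp add: algebra_simps)
qed

lemma rotation_hits_good_block: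
  fixes \<beta> a b \<epsilon> :: real
  assumes irr: "\<beta> \<notin> \<rat>" and ab: "0 \<le> a" "a \<le> b" "b \<le> 1" and eps: "\<epsilon> > 0"
  obtains L where "L > 0" "\<And>x. \<bar>rotation_hits \<beta> x a b L - (b - a) * real L\<bar> \<le> \<epsilon> / 2 * real L"
proof -
  define \<delta> where "\<delta> = min 1 (1 / (16 / \<epsilon> + 1))"
  have "16 / \<epsilon> > 0" using eps by simp
  hence pos: "16 / \<epsilon> + 1 > 0" by linarith
  have \<delta>: "\<delta> > 0" "\<delta> \<le> 1" using pos by (auto simp: \<delta>_def)
  obtain q where q: "q > 0" "\<bar>frac (real q * \<beta>) - \<delta> / 2\<bar> < \<delta> / 2"
    using Kronecker_approx_1_explicit[OF irr, of "\<delta>/2" "\<delta>/2"] \<delta> by auto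
  define \<eta> where "\<eta> = frac (real q * \<beta>)"
  have \<eta>: "\<eta> > 0" "\<eta> < \<delta>" using q(2) unfolding \<eta>_def abs_less_iff by linarith+
  define J where "J = nat \<lfloor>1 / \<eta>\<rfloor>"
  have inv: "1 / \<eta> > 16 / \<epsilon> + 1"
  proof -
    have "\<eta> < 1 / (16 / \<epsilon> + 1)" using \<eta> by (simp add: \<delta>_def)
    then show ?thesis using \<eta> pos by (simp add: field_simps)
  qed
  hence "\<lfloor>1 / \<eta>\<rfloor> \<ge> 0" using pos \<eta> by simp
  hence rJ: "real J = of_int \<lfloor>1 / \<eta>\<rfloor>" unfolding J_def by simp
  have J: "real J \<le> 1 / \<eta>" "real J > 1 / \<eta> - 1"
    unfolding rJ using floor_correct[of "1 / \<eta>"] by linarith+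
  have J1: "real J * \<eta> \<le> 1" using J(1) \<eta> by (simp add: field_simps)
  have J2: "real J * \<eta> > 1 - \<eta>" using J(2) \<eta> by (simp add: field_simps)
  have Jeps: "real J > 16 / \<epsilon>" using J(2) inv by linarith
  show ?thesis
  proof
    show "J * q > 0" using Jeps eps q
      by (metis divide_pos_pos mult_pos_pos of_nat_0_less_iff order.strict_trans zero_less_numeral)
    fix x
    have "8 * real q * 16 \<le> 8 * real q * (\<epsilon> * real J)"
      using Jeps eps by (intro mult_left_mono) (auto simp: field_simps)
    then have "8 * real q \<le> \<epsilon> / 2 * real (J * q)" by simp
    moreover have "\<bar>rotation_hits \<beta> x a b (J * q) - (b - a) * real (J * q)\<bar> \<le> 8 * real q"
      by (rule rotation_hits_block[OF \<eta>_def[symmetric] \<eta>(1) J1 J2 ab])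
    ultimately show "\<bar>rotation_hits \<beta> x a b (J * q) - (b - a) * real (J * q)\<bar> \<le> \<epsilon> / 2 * real (J * q)"
      by linarith
  qed
qed

lemma rotation_hits_uniform:
  fixes \<beta> a b \<epsilon> :: real
  assumes irr: "\<beta> \<notin> \<rat>" and ab: "0 \<le> a" "a \<le> b" "b \<le> 1" and eps: "\<epsilon> > 0"
  obtains M0 where "\<And>M x. M \<ge> M0 \<Longrightarrow> \<bar>rotation_hits \<beta> x a b M - (b - a) * real M\<bar> \<le> \<epsilon> * real M"
proof -
  obtain L where L: "L > 0" and blk: "\<And>x. \<bar>rotation_hits \<beta> x a b L - (b - a) * real L\<bar> \<le> \<epsilon> / 2 * real L"
    using rotation_hits_good_block[OF irr ab eps] by blast
  show ?thesis
  proof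
    fix M x assume M: "M \<ge> nat \<lceil>2 * real L / \<epsilon>\<rceil>"
    have LM: "real L \<le> \<epsilon> * real M / 2"
    proof -
      have "2 * real L / \<epsilon> \<le> real M" using M by linarith
      then show ?thesis using eps by (simp add: field_simps)
    qed
    define Q where "Q = M div L"
    define R where "R = M mod L"
    have MQR: "M = Q * L + R" by (simp add: Q_def R_def)
    have RL: "R < L" using L by (simp add: R_def)
    have 1: "\<bar>rotation_hits \<beta> x a b (Q * L) - (b - a) * real (Q * L)\<bar> \<le> real Q * (\<epsilon> / 2 * real L)"
      by (rule rotation_hits_blocks[OF blk])
    have "real Q * (\<epsilon> / 2 * real L) \<le> \<epsilon> * real M / 2"
      using MQR eps by (simp add: mult_left_mono)
    moreover have "0 \<le> rotation_hits \<beta> (x + real (Q * L) * \<beta>) a b R"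
      "rotation_hits \<beta> (x + real (Q * L) * \<beta>) a b R \<le> real R"
      by (rule rotation_hits_nonneg rotation_hits_le)+
    moreover have "0 \<le> (b - a) * real R" "(b - a) * real R \<le> real R"
      using ab mult_right_mono[of "b - a" 1 "real R"] by auto
    moreover have "rotation_hits \<beta> x a b M
        = rotation_hits \<beta> x a b (Q * L) + rotation_hits \<beta> (x + real (Q * L) * \<beta>) a b R"
      unfolding MQR by (rule rotation_hits_add)
    moreover have "(b - a) * real M = (b - a) * real (Q * L) + (b - a) * real R"
      unfolding MQR by (simp add: algebra_simps)
    moreover have "real R \<le> real L" using RL by simp
    ultimately show "\<bar>rotation_hits \<beta> x a b M - (b - a) * real M\<bar> \<le> \<epsilon> * real M"
      using 1 LM unfolding abs_le_iff by linarith
  qed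
qed

lemma rotation_hits_interval:
  fixes \<beta> x a b :: real
  assumes irr: "\<beta> \<notin> \<rat>" and ab: "0 \<le> a" "a < b" "b \<le> 1"
  obtains t :: nat where "frac (x + real t * \<beta>) \<in> {a..<b}"
proof -
  obtain M0 where M0: "\<And>M x. M \<ge> M0 \<Longrightarrow> \<bar>rotation_hits \<beta> x a b M - (b - a) * real M\<bar> \<le> (b - a) / 2 * real M"
    using rotation_hits_uniform[OF irr ab(1) _ ab(3), of "(b - a) / 2"] ab by (metis half_gt_zero less_eq_real_def diff_gt_0_iff_gt)
  have "(b - a) / 2 * real (M0 + 1) < (b - a) * real (M0 + 1)" using ab by simp
  then have "rotation_hits \<beta> x a b (M0 + 1) \<noteq> 0" using M0[of "M0 + 1" x] by auto
  then obtain t where "of_bool (frac (x + real t * \<beta>) \<in> {a..<b}) \<noteq> (0::real)"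
    unfolding rotation_hits_def by (meson sum.neutral)
  then show ?thesis using that by simp
qed

definition window_mean :: "(int \<Rightarrow> real) \<Rightarrow> nat \<Rightarrow> real" where
  "window_mean f k = (\<Sum>t\<in>{- int k..int k}. f t) / (2 * real k + 1)"

lemma window_mean_add: "window_mean (\<lambda>t. f t + g t) k = window_mean f k + window_mean g k"
  unfolding window_mean_def by (simp add: sum.distrib add_divide_distrib)

lemma window_mean_sum: "window_mean (\<lambda>t. \<Sum>i\<in>I. f i t) k = (\<Sum>i\<in>I. window_mean (f i) k)"
  unfolding window_mean_def sum_divide_distrib[symmetric] by (subst sum.swap) (rule refl)

lemma window_mean_rotation_hits:
  "window_mean (\<lambda>t. of_bool (frac (x + of_int t * \<beta>) \<in> {a..<b})) k
   = rotation_hits \<beta> (x - real k * \<beta>) a b (2 * k + 1) / (2 * real k + 1)"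
proof -
  have "bij_betw (\<lambda>u. int u - int k) {..<2 * k + 1} {- int k..int k}"
    by (rule bij_betwI[where g = "\<lambda>t. nat (t + int k)"]) auto
  then have "(\<Sum>t\<in>{- int k..int k}. of_bool (frac (x + of_int t * \<beta>) \<in> {a..<b}))
      = (\<Sum>u<2 * k + 1. of_bool (frac (x + of_int (int u - int k) * \<beta>) \<in> {a..<b}) :: real)"
    by (rule sum.reindex_bij_betw[symmetric])
  also have "\<dots> = rotation_hits \<beta> (x - real k * \<beta>) a b (2 * k + 1)"
    unfolding rotation_hits_def by (intro sum.cong refl arg_cong[where f = of_bool]) (simp add: algebra_simps)
  finally show ?thesis by (simp add: window_mean_def)
qed

lemma window_mean_rotation_interval:
  fixes \<beta> a b x :: real
  assumes irr: "\<beta> \<notin> \<rat>" and ab: "0 \<le> a" "a \<le> b" "b \<le> 1"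
  shows "(window_mean (\<lambda>t. of_bool (frac (x + of_int t * \<beta>) \<in> {a..<b}))) \<longlonglongrightarrow> b - a"
proof (rule LIMSEQ_I)
  fix r :: real assume r: "r > 0"
  obtain M0 where M0: "\<And>M x. M \<ge> M0 \<Longrightarrow> \<bar>rotation_hits \<beta> x a b M - (b - a) * real M\<bar> \<le> r / 2 * real M"
    using rotation_hits_uniform[OF irr ab, of "r / 2"] r by auto
  show "\<exists>no. \<forall>k\<ge>no. norm (window_mean (\<lambda>t. of_bool (frac (x + of_int t * \<beta>) \<in> {a..<b})) k - (b - a)) < r"
  proof (intro exI allI impI)
    fix k assume k: "k \<ge> M0"
    have pos: "2 * real k + 1 > 0" by simp
    have "\<bar>rotation_hits \<beta> (x - real k * \<beta>) a b (2 * k + 1) - (b - a) * (2 * real k + 1)\<bar>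
        \<le> r / 2 * (2 * real k + 1)"
      using M0[of "2 * k + 1" "x - real k * \<beta>"] k by (simp add: add.commute)
    moreover have "\<bar>rotation_hits \<beta> (x - real k * \<beta>) a b (2 * k + 1) / (2 * real k + 1) - (b - a)\<bar>
        = \<bar>rotation_hits \<beta> (x - real k * \<beta>) a b (2 * k + 1) - (b - a) * (2 * real k + 1)\<bar> / (2 * real k + 1)"
      using pos by (simp add: field_simps abs_divide)
    ultimately have "\<bar>rotation_hits \<beta> (x - real k * \<beta>) a b (2 * k + 1) / (2 * real k + 1) - (b - a)\<bar> \<le> r / 2"
      using pos by (simp add: divide_le_eq)
    then show "norm (window_mean (\<lambda>t. of_bool (frac (x + of_int t * \<beta>) \<in> {a..<b})) k - (b - a)) < r"
      unfolding window_mean_rotation_hits real_norm_def using r by linarith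
  qed
qed

lemma tendsto_const_divide_window: "(\<lambda>k. c / (2 * real k + 1)) \<longlonglongrightarrow> 0"
proof (rule Lim_null_comparison)
  show "\<forall>\<^sub>F k in sequentially. norm (c / (2 * real k + 1)) \<le> \<bar>c\<bar> / real (Suc k)"
  proof (rule always_eventually, rule allI)
    fix k :: nat
    have "real (Suc k) \<le> (2 * real k + 1)" by simp
    then have "\<bar>c\<bar> / (2 * real k + 1) \<le> \<bar>c\<bar> / real (Suc k)" by (intro divide_left_mono) auto
    then show "norm (c / (2 * real k + 1)) \<le> \<bar>c\<bar> / real (Suc k)" by (simp add: abs_divide)
  qed
  show "(\<lambda>k. \<bar>c\<bar> / real (Suc k)) \<longlonglongrightarrow> 0"
    using LIMSEQ_Suc[OF lim_const_over_n[of "\<bar>c\<bar>"]] by simp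
qed

lemma tendsto_divide_window_bounded_diff:
  fixes f g :: "nat \<Rightarrow> real"
  assumes g: "(\<lambda>k. g k / (2 * real k + 1)) \<longlonglongrightarrow> L" and b: "\<And>k. \<bar>f k - g k\<bar> \<le> K"
  shows "(\<lambda>k. f k / (2 * real k + 1)) \<longlonglongrightarrow> L"
proof -
  have z: "(\<lambda>k. (f k - g k) / (2 * real k + 1)) \<longlonglongrightarrow> 0"
  proof (rule Lim_null_comparison)
    show "\<forall>\<^sub>F k in sequentially. norm ((f k - g k) / (2 * real k + 1)) \<le> K / (2 * real k + 1)"
      using b by (intro always_eventually allI) (simp add: abs_divide divide_right_mono)
    show "(\<lambda>k. K / (2 * real k + 1)) \<longlonglongrightarrow> 0" by (rule tendsto_const_divide_window)
  qed
  have "(\<lambda>k. g k / (2 * real k + 1) + (f k - g k) / (2 * real k + 1)) \<longlonglongrightarrow> L + 0"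
    by (rule tendsto_add[OF g z])
  moreover have "g k / (2 * real k + 1) + (f k - g k) / (2 * real k + 1) = f k / (2 * real k + 1)" for k
    by (simp add: add_divide_distrib[symmetric])
  ultimately show ?thesis by simp
qed

lemma frac_rotation_inj:
  fixes \<beta> x :: real and s t :: int
  assumes "\<beta> \<notin> \<rat>" and "frac (x + of_int s * \<beta>) = frac (x + of_int t * \<beta>)"
  shows "s = t"
proof (rule ccontr)
  assume ne: "s \<noteq> t"
  have "(x + of_int s * \<beta>) - (x + of_int t * \<beta>) \<in> \<int>"
  proof -
    have "(x + of_int s * \<beta>) - (x + of_int t * \<beta>) = of_int (\<lfloor>x + of_int s * \<beta>\<rfloor> - \<lfloor>x + of_int t * \<beta>\<rfloor>)"
      using assms(2) by (simp add: frac_def)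
    then show ?thesis by (simp only: Ints_of_int)
  qed
  then obtain z where z: "of_int (s - t) * \<beta> = of_int z" by (auto simp: algebra_simps elim: Ints_cases)
  have "of_int (s - t) \<noteq> (0::real)" using ne by simp
  then have "\<beta> = of_int z / of_int (s - t)" using z by (simp add: field_simps)
  then show False using assms(1) by simp
qed

lemma window_sum_rotation_point_le_1:
  fixes \<beta> x c :: real
  assumes "\<beta> \<notin> \<rat>"
  shows "(\<Sum>t\<in>{- int k..int k}. of_bool (frac (x + of_int t * \<beta>) = c)) \<le> (1::real)"
proof -
  have "inj_on (\<lambda>t. frac (x + of_int t * \<beta>)) ({- int k..int k} \<inter> {t. frac (x + of_int t * \<beta>) = c})"
    using frac_rotation_inj[OF assms] by (intro inj_onI)
  then have "card ({- int k..int k} \<inter> {t. frac (x + of_int t * \<beta>) = c}) \<le> card {c}"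
    by (rule card_inj_on_le) auto
  then show ?thesis by simp
qed

section \<open>Frequencies along irrational rotations\<close>

definition cell :: "nat \<Rightarrow> nat \<Rightarrow> real set" where
  "cell N j = {real j / real N ..< real (j + 1) / real N}"

lemma mem_cell_iff:
  assumes N: "N > 0" and u: "0 \<le> u" "u < 1"
  shows "u \<in> cell N j \<longleftrightarrow> j = nat \<lfloor>u * real N\<rfloor>"
proof -
  have "u \<in> cell N j \<longleftrightarrow> real j \<le> u * real N \<and> u * real N < real j + 1"
    using N by (simp add: cell_def field_simps)
  also have "\<dots> \<longleftrightarrow> \<lfloor>u * real N\<rfloor> = int j"
  proof -
    have "\<lfloor>u * real N\<rfloor> = int j \<longleftrightarrow> real_of_int (int j) \<le> u * real N \<and> u * real N < real_of_int (int j) + 1"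
      by (rule floor_eq_iff)
    then show ?thesis by simp
  qed
  also have "\<dots> \<longleftrightarrow> j = nat \<lfloor>u * real N\<rfloor>"
  proof -
    have "0 \<le> u * real N" using u by simp
    then have "0 \<le> \<lfloor>u * real N\<rfloor>" by simp
    then show ?thesis by auto
  qed
  finally show ?thesis .
qed

lemma cell_index_less:
  assumes N: "N > 0" and u: "0 \<le> u" "u < 1"
  shows "nat \<lfloor>u * real N\<rfloor> < N"
proof -
  have "u * real N < real N" using N u by simp
  then have "\<lfloor>u * real N\<rfloor> < int N" by (simp add: floor_less_iff)
  then have "nat \<lfloor>u * real N\<rfloor> < nat (int N)" using N by (subst zless_nat_conj) simp
  then show ?thesis by simp
qed

lemma sum_cells:
  assumes N: "N > 0" and fin: "finite T"
  shows "(\<Sum>j\<in>T. of_bool (frac z \<in> cell N j)) = (of_bool (nat \<lfloor>frac z * real N\<rfloor> \<in> T) :: real)"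
proof -
  have "(\<Sum>j\<in>T. of_bool (frac z \<in> cell N j)) = (\<Sum>j\<in>T. if j = nat \<lfloor>frac z * real N\<rfloor> then 1 else (0::real))"
    using mem_cell_iff[OF N, of "frac z"] by (intro sum.cong) (auto simp: frac_lt_1)
  also have "\<dots> = of_bool (nat \<lfloor>frac z * real N\<rfloor> \<in> T)" using fin by (simp add: sum.delta)
  finally show ?thesis .
qed

lemma window_mean_rotation_cells:
  assumes irr: "\<beta> \<notin> \<rat>" and N: "N > 0" and T: "T \<subseteq> {..<N}"
  shows "window_mean (\<lambda>t. \<Sum>j\<in>T. of_bool (frac (x + of_int t * \<beta>) \<in> cell N j)) \<longlonglongrightarrow> real (card T) / real N"
proof -
  have "window_mean (\<lambda>t. of_bool (frac (x + of_int t * \<beta>) \<in> cell N j)) \<longlonglongrightarrow> 1 / real N"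
    if "j \<in> T" for j
  proof -
    have ab: "0 \<le> real j / real N" "real j / real N \<le> real (j + 1) / real N" "real (j + 1) / real N \<le> 1"
      using that T N by (auto simp: divide_right_mono field_simps)
    moreover have "real (j + 1) / real N - real j / real N = 1 / real N" by (simp add: add_divide_distrib)
    ultimately show ?thesis
      unfolding cell_def using window_mean_rotation_interval[OF irr ab] by simp
  qed
  then have "(\<lambda>k. \<Sum>j\<in>T. window_mean (\<lambda>t. of_bool (frac (x + of_int t * \<beta>) \<in> cell N j)) k)
      \<longlonglongrightarrow> (\<Sum>j\<in>T. 1 / real N)"
    by (rule tendsto_sum)
  then show ?thesis by (simp only: window_mean_sum[symmetric]) simp
qed

definition switches_only_at :: "(real \<Rightarrow> bool) \<Rightarrow> real set \<Rightarrow> bool" where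
  "switches_only_at S C \<longleftrightarrow> (\<forall>z. S z = S (frac z)) \<and>
     (\<forall>u u'. 0 \<le> u \<longrightarrow> u < u' \<longrightarrow> u' < 1 \<longrightarrow> (\<forall>c\<in>C. \<not> (u < c \<and> c \<le> u')) \<longrightarrow> S u = S u')"

definition regular_cell :: "real set \<Rightarrow> nat \<Rightarrow> nat \<Rightarrow> bool" where
  "regular_cell C N j \<longleftrightarrow> (\<forall>c\<in>C. \<not> (real j / real N < c \<and> c < real (j + 1) / real N))"

definition inner_cells :: "(real \<Rightarrow> bool) \<Rightarrow> real set \<Rightarrow> nat \<Rightarrow> nat set" where
  "inner_cells S C N = {j. j < N \<and> regular_cell C N j \<and> S (real j / real N)}"

definition irregular_cells :: "real set \<Rightarrow> nat \<Rightarrow> nat set" where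
  "irregular_cells C N = {j. j < N \<and> \<not> regular_cell C N j}"

lemma card_irregular_cells_le:
  assumes C: "finite C" and N: "N > 0"
  shows "card (irregular_cells C N) \<le> card C"
proof -
  define f where "f j = (SOME c. c \<in> C \<and> real j / real N < c \<and> c < real (j + 1) / real N)" for j
  have fj: "f j \<in> C \<and> real j / real N < f j \<and> f j < real (j + 1) / real N"
    if "j \<in> irregular_cells C N" for j
  proof -
    have "\<exists>c. c \<in> C \<and> real j / real N < c \<and> c < real (j + 1) / real N"
      using that by (auto simp: irregular_cells_def regular_cell_def)
    then show ?thesis unfolding f_def by (rule someI_ex)
  qed
  have "inj_on f (irregular_cells C N)"
  proof (rule inj_onI)
    fix i j assume i: "i \<in> irregular_cells C N" and j: "j \<in> irregular_cells C N" and e: "f i = f j"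
    have "real i / real N < real (j + 1) / real N" "real j / real N < real (i + 1) / real N"
      using fj[OF i] fj[OF j] e by auto
    then have "real i < real (j + 1)" "real j < real (i + 1)"
      using N by (simp_all add: divide_less_cancel)
    then show "i = j" by simp
  qed
  moreover have "f ` irregular_cells C N \<subseteq> C" using fj by auto
  ultimately show ?thesis using C by (rule card_inj_on_le)
qed

lemma switches_only_at_regular_cell:
  assumes S: "switches_only_at S C" and N: "N > 0"
    and reg: "regular_cell C N (nat \<lfloor>frac z * real N\<rfloor>)"
  shows "S z \<longleftrightarrow> S (real (nat \<lfloor>frac z * real N\<rfloor>) / real N)"
proof -
  define j where "j = nat \<lfloor>frac z * real N\<rfloor>"
  have "frac z \<in> cell N j" using mem_cell_iff[OF N, of "frac z"] by (simp add: frac_lt_1 j_def)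
  then have lo: "real j / real N \<le> frac z" and hi: "frac z < real (j + 1) / real N"
    by (auto simp: cell_def)
  have "S (real j / real N) \<longleftrightarrow> S (frac z)"
  proof (cases "real j / real N = frac z")
    case False
    then have "real j / real N < frac z" using lo by simp
    moreover have "\<forall>c\<in>C. \<not> (real j / real N < c \<and> c \<le> frac z)"
      using reg hi unfolding regular_cell_def j_def[symmetric] by force
    ultimately show ?thesis using S frac_lt_1[of z] unfolding switches_only_at_def by simp
  qed simp
  then show ?thesis using S unfolding switches_only_at_def j_def by metis
qed

lemma sum_inner_cells_le:
  assumes S: "switches_only_at S C" and N: "N > 0"
  shows "(\<Sum>j\<in>inner_cells S C N. of_bool (frac z \<in> cell N j)) \<le> (of_bool (S z) :: real)"
proof -
  have "finite (inner_cells S C N)" by (simp add: inner_cells_def)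
  then have "(\<Sum>j\<in>inner_cells S C N. of_bool (frac z \<in> cell N j))
      = (of_bool (nat \<lfloor>frac z * real N\<rfloor> \<in> inner_cells S C N) :: real)"
    by (rule sum_cells[OF N])
  also have "\<dots> \<le> of_bool (S z)"
    using switches_only_at_regular_cell[OF S N, of z] by (auto simp: inner_cells_def)
  finally show ?thesis .
qed

lemma le_sum_inner_irregular_cells:
  assumes S: "switches_only_at S C" and N: "N > 0"
  shows "(of_bool (S z) :: real)
    \<le> (\<Sum>j\<in>inner_cells S C N \<union> irregular_cells C N. of_bool (frac z \<in> cell N j))"
proof -
  have "finite (inner_cells S C N \<union> irregular_cells C N)"
    by (simp add: inner_cells_def irregular_cells_def)
  then have "(\<Sum>j\<in>inner_cells S C N \<union> irregular_cells C N. of_bool (frac z \<in> cell N j))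
      = (of_bool (nat \<lfloor>frac z * real N\<rfloor> \<in> inner_cells S C N \<union> irregular_cells C N) :: real)"
    by (rule sum_cells[OF N])
  moreover have "nat \<lfloor>frac z * real N\<rfloor> < N" by (rule cell_index_less[OF N]) (auto simp: frac_lt_1)
  ultimately show ?thesis
    using switches_only_at_regular_cell[OF S N, of z]
    by (auto simp: inner_cells_def irregular_cells_def)
qed

lemma window_mean_mono:
  assumes "\<And>t. f t \<le> g t"
  shows "window_mean f k \<le> window_mean g k"
  unfolding window_mean_def by (intro divide_right_mono sum_mono assms) simp

lemma window_mean_switching_eventually:
  assumes S: "switches_only_at S C" and C: "finite C" and irr: "\<beta> \<notin> \<rat>"
    and N: "N > 0" and eps: "\<epsilon> > 0"
  shows "eventually (\<lambda>k. real (card (inner_cells S C N)) / real N - \<epsilon>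
            < window_mean (\<lambda>t. of_bool (S (x + of_int t * \<beta>))) k \<and>
          window_mean (\<lambda>t. of_bool (S (x + of_int t * \<beta>))) k
            < (real (card (inner_cells S C N)) + real (card C)) / real N + \<epsilon>) sequentially"
proof -
  let ?I = "inner_cells S C N" and ?B = "irregular_cells C N"
  let ?F = "window_mean (\<lambda>t. of_bool (S (x + of_int t * \<beta>)))"
  have sub: "?I \<subseteq> {..<N}" "?I \<union> ?B \<subseteq> {..<N}"
    by (auto simp: inner_cells_def irregular_cells_def)
  have "real (card (?I \<union> ?B)) \<le> real (card ?I) + real (card C)"
    using card_Un_le[of ?I ?B] card_irregular_cells_le[OF C N] by linarith
  then have bound: "real (card (?I \<union> ?B)) / real N \<le> (real (card ?I) + real (card C)) / real N"
    using N by (simp add: divide_right_mono)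
  have "eventually (\<lambda>k. real (card ?I) / real N - \<epsilon>
      < window_mean (\<lambda>t. \<Sum>j\<in>?I. of_bool (frac (x + of_int t * \<beta>) \<in> cell N j)) k) sequentially"
    using window_mean_rotation_cells[OF irr N sub(1)] eps by (intro order_tendstoD(1)) auto
  moreover have "eventually (\<lambda>k. window_mean (\<lambda>t. \<Sum>j\<in>?I \<union> ?B. of_bool (frac (x + of_int t * \<beta>) \<in> cell N j)) k
      < real (card (?I \<union> ?B)) / real N + \<epsilon>) sequentially"
    using window_mean_rotation_cells[OF irr N sub(2)] eps by (intro order_tendstoD(2)) auto
  ultimately show ?thesis
  proof eventually_elim
    case (elim k)
    have "window_mean (\<lambda>t. \<Sum>j\<in>?I. of_bool (frac (x + of_int t * \<beta>) \<in> cell N j)) k \<le> ?F k"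
      using sum_inner_cells_le[OF S N] sum_cells by (intro window_mean_mono) simp
    moreover have "?F k \<le> window_mean (\<lambda>t. \<Sum>j\<in>?I \<union> ?B. of_bool (frac (x + of_int t * \<beta>) \<in> cell N j)) k"
      using le_sum_inner_irregular_cells[OF S N] by (intro window_mean_mono) simp
    ultimately show ?case using elim bound by linarith
  qed
qed

text \<open>Along one irrational rotation, the two proportions approximate the same frequency from
  below and from above.\<close>

lemma inner_cells_proportion_le:
  assumes S: "switches_only_at S C" and C: "finite C" and N: "N > 0" and M: "M > 0"
  shows "real (card (inner_cells S C N)) / real N
    \<le> real (card (inner_cells S C M)) / real M + real (card C) / real M"
proof (rule field_le_epsilon)
  fix e :: real assume e: "e > 0"
  obtain \<beta> :: real where irr: "\<beta> \<notin> \<rat>"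
    using uncountable_UNIV_real countable_rat by (metis UNIV_I subsetI countable_subset)
  let ?F = "window_mean (\<lambda>t. of_bool (S (0 + of_int t * \<beta>)))"
  have "eventually (\<lambda>k. real (card (inner_cells S C N)) / real N - e/2 < ?F k \<and>
      ?F k < (real (card (inner_cells S C M)) + real (card C)) / real M + e/2) sequentially"
    using eventually_conj[OF window_mean_switching_eventually[OF S C irr N, of "e/2" 0]
        window_mean_switching_eventually[OF S C irr M, of "e/2" 0]] e
    by (auto elim: eventually_mono)
  then obtain k where "real (card (inner_cells S C N)) / real N - e/2 < ?F k"
    "?F k < (real (card (inner_cells S C M)) + real (card C)) / real M + e/2"
    unfolding eventually_sequentially by blast
  then show "real (card (inner_cells S C N)) / real N
      \<le> real (card (inner_cells S C M)) / real M + real (card C) / real M + e"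
    by (simp add: add_divide_distrib)
qed

text \<open>The frequency is the supremum of the proportions of inner cells; it does not depend on
  the rotation.\<close>

lemma rotation_frequency_exists:
  assumes S: "switches_only_at S C" and C: "finite C"
  shows "\<exists>A. \<forall>\<beta> x. \<beta> \<notin> \<rat> \<longrightarrow> window_mean (\<lambda>t. of_bool (S (x + of_int t * \<beta>))) \<longlonglongrightarrow> A"
proof -
  define g where "g N = real (card (inner_cells S C N)) / real N" for N
  define K where "K = real (card C)"
  define A where "A = Sup (g ` {0<..})"
  have "g N \<le> 1" if "N > 0" for N
  proof -
    have "card (inner_cells S C N) \<le> card {..<N}"
      by (rule card_mono) (auto simp: inner_cells_def)
    then show ?thesis using that by (simp add: g_def)
  qed
  then have bdd: "bdd_above (g ` {0<..})" by (auto intro!: bdd_aboveI[of _ 1])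
  have gA: "g N \<le> A" if "N > 0" for N unfolding A_def using bdd that by (intro cSup_upper) auto
  have Ag: "A \<le> g M + K / real M" if M: "M > 0" for M
    unfolding A_def g_def K_def by (rule cSup_least) (auto intro: inner_cells_proportion_le[OF S C _ M])
  have "window_mean (\<lambda>t. of_bool (S (x + of_int t * \<beta>))) \<longlonglongrightarrow> A" if irr: "\<beta> \<notin> \<rat>" for \<beta> x
  proof (rule LIMSEQ_I)
    fix r :: real assume r: "r > 0"
    define M where "M = nat \<lceil>4 * (K + 1) / r\<rceil> + 1"
    have M: "M > 0" by (simp add: M_def)
    have "4 * (K + 1) / r \<le> real M" unfolding M_def by linarith
    then have "4 * (K + 1) \<le> real M * r" using r by (simp add: field_simps)
    then have KM: "K / real M < r / 2" using M by (simp add: K_def field_simps)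
    obtain k0 where k0: "\<And>k. k \<ge> k0 \<Longrightarrow> g M - r/4 < window_mean (\<lambda>t. of_bool (S (x + of_int t * \<beta>))) k
        \<and> window_mean (\<lambda>t. of_bool (S (x + of_int t * \<beta>))) k < g M + K / real M + r/4"
      using window_mean_switching_eventually[OF S C irr M, of "r/4" x] r unfolding eventually_sequentially
      by (auto simp: g_def K_def add_divide_distrib)
    show "\<exists>k0. \<forall>k\<ge>k0. norm (window_mean (\<lambda>t. of_bool (S (x + of_int t * \<beta>))) k - A) < r"
      using k0 gA[OF M] Ag[OF M] KM by (intro exI[of _ k0] allI impI) (force simp: abs_less_iff)
  qed
  then show ?thesis by blast
qed

section \<open>Occurrences of patterns\<close>

definition pattern_domain :: "pattern \<Rightarrow> int set" where
  "pattern_domain p = {i. p i \<noteq> None}"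

definition normalized_pattern :: "pattern \<Rightarrow> bool" where
  "normalized_pattern p \<longleftrightarrow> finite (pattern_domain p) \<and> 0 \<in> pattern_domain p \<and> (\<forall>i\<in>pattern_domain p. 0 \<le> i)"

definition pattern_length :: "pattern \<Rightarrow> nat" where
  "pattern_length p = nat (Max (pattern_domain p))"

definition pattern_size :: "pattern \<Rightarrow> nat" where
  "pattern_size p = card (pattern_domain p) * (pattern_length p + 1)"

definition occurrences :: "(int \<Rightarrow> nat) \<Rightarrow> pattern \<Rightarrow> nat \<Rightarrow> nat" where
  "occurrences Y p k = card {A. A \<subseteq> {- int k..int k} \<and> A \<noteq> {} \<and> pattern_of Y A = p}"

definition occurs_at :: "(int \<Rightarrow> nat) \<Rightarrow> pattern \<Rightarrow> int \<Rightarrow> bool" where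
  "occurs_at Y p t \<longleftrightarrow> (\<forall>i\<in>pattern_domain p. p i = Some (Y (t + i)))"

lemma pattern_domain_pattern_of:
  assumes "finite A" "A \<noteq> {}"
  shows "pattern_domain (pattern_of Y A) = (\<lambda>a. a - Min A) ` A"
proof -
  have "i \<in> pattern_domain (pattern_of Y A) \<longleftrightarrow> i + Min A \<in> A" for i by (simp add: pattern_domain_def pattern_of_def)
  moreover have "i + Min A \<in> A \<longleftrightarrow> i \<in> (\<lambda>a. a - Min A) ` A" for i by force
  ultimately show ?thesis by blast
qed

lemma normalized_pattern_of:
  assumes "finite A" "A \<noteq> {}" "pattern_of Y A = p"
  shows "normalized_pattern p" and "A = (\<lambda>i. Min A + i) ` pattern_domain p"
proof -
  have d: "pattern_domain p = (\<lambda>a. a - Min A) ` A" using pattern_domain_pattern_of[OF assms(1,2), of Y] assms(3) by simp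
  show "normalized_pattern p" unfolding normalized_pattern_def d using assms(1,2) by (auto intro: Min_in)
  show "A = (\<lambda>i. Min A + i) ` pattern_domain p" unfolding d image_image by simp
qed

lemma Min_translate_pattern_domain:
  assumes v: "normalized_pattern p"
  shows "Min ((\<lambda>i. t + i) ` pattern_domain p) = t"
  using v unfolding normalized_pattern_def by (intro Min_eqI) force+

lemma occurrences_not_normalized: "\<not> normalized_pattern p \<Longrightarrow> occurrences Y p k = 0"
proof -
  assume nv: "\<not> normalized_pattern p"
  have "{A. A \<subseteq> {- int k..int k} \<and> A \<noteq> {} \<and> pattern_of Y A = p} = {}"
  proof (rule ccontr)
    assume "{A. A \<subseteq> {- int k..int k} \<and> A \<noteq> {} \<and> pattern_of Y A = p} \<noteq> {}"
    then obtain A where A: "A \<subseteq> {- int k..int k}" "A \<noteq> {}" "pattern_of Y A = p" by auto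
    have "finite A" using A(1) finite_subset by blast
    then show False using normalized_pattern_of(1)[OF _ A(2,3)] nv by simp
  qed
  then show ?thesis by (simp add: occurrences_def)
qed

lemma pattern_of_translate:
  assumes v: "normalized_pattern p" and occ: "occurs_at Y p t"
  shows "pattern_of Y ((\<lambda>i. t + i) ` pattern_domain p) = p"
proof
  fix i
  have "i + t \<in> (\<lambda>i. t + i) ` pattern_domain p \<longleftrightarrow> i \<in> pattern_domain p" by (auto simp: add.commute)
  then show "pattern_of Y ((\<lambda>i. t + i) ` pattern_domain p) i = p i"
    using occ unfolding pattern_of_def Min_translate_pattern_domain[OF v]
    by (auto simp: occurs_at_def pattern_domain_def add.commute)
qed

lemma occurs_at_Min:
  assumes "finite A" "A \<noteq> {}" "pattern_of Y A = p"
  shows "occurs_at Y p (Min A)"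
  unfolding occurs_at_def
proof
  fix i assume "i \<in> pattern_domain p"
  then have "Min A + i \<in> A" using normalized_pattern_of(2)[OF assms] by blast
  then show "p i = Some (Y (Min A + i))" using assms(3) by (auto simp: pattern_of_def add.commute)
qed

lemma occurrences_eq_card:
  assumes v: "normalized_pattern p"
  shows "occurrences Y p k = card {t\<in>{- int k..int k}. (\<forall>i\<in>pattern_domain p. t + i \<in> {- int k..int k}) \<and> occurs_at Y p t}"
proof -
  define T where "T = {t\<in>{- int k..int k}. (\<forall>i\<in>pattern_domain p. t + i \<in> {- int k..int k}) \<and> occurs_at Y p t}"
  define AA where "AA = {A. A \<subseteq> {- int k..int k} \<and> A \<noteq> {} \<and> pattern_of Y A = p}"
  have "(\<lambda>i. t + i) ` pattern_domain p \<in> AA" if t: "t \<in> T" for t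
  proof -
    have "(\<lambda>i. t + i) ` pattern_domain p \<noteq> {}" using v by (auto simp: normalized_pattern_def)
    then show ?thesis using t pattern_of_translate[OF v] by (auto simp: T_def AA_def)
  qed
  moreover have "Min A \<in> T" "(\<lambda>i. Min A + i) ` pattern_domain p = A" if A: "A \<in> AA" for A
  proof -
    from A have fA: "finite A" and A': "A \<subseteq> {- int k..int k}" "A \<noteq> {}" "pattern_of Y A = p"
      by (auto simp: AA_def intro: finite_subset)
    show eqA: "(\<lambda>i. Min A + i) ` pattern_domain p = A" using normalized_pattern_of(2)[OF fA A'(2,3)] by simp
    have "Min A \<in> {- int k..int k}" using Min_in[OF fA A'(2)] A'(1) by auto
    moreover have "\<forall>i\<in>pattern_domain p. Min A + i \<in> {- int k..int k}" using eqA A'(1) by blast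
    ultimately show "Min A \<in> T" using occurs_at_Min[OF fA A'(2,3)] by (simp add: T_def)
  qed
  ultimately have "bij_betw (\<lambda>t. (\<lambda>i. t + i) ` pattern_domain p) T AA"
    using Min_translate_pattern_domain[OF v] by (intro bij_betw_byWitness[where f'=Min]) auto
  then have "card T = card AA" by (rule bij_betw_same_card)
  then show ?thesis by (simp add: occurrences_def T_def AA_def)
qed

lemma occurrences_window_bounds:
  assumes v: "normalized_pattern p"
  shows "real (occurrences Y p k) \<le> (\<Sum>t\<in>{- int k..int k}. of_bool (occurs_at Y p t))"
    and "(\<Sum>t\<in>{- int k..int k}. of_bool (occurs_at Y p t)) \<le> real (occurrences Y p k) + real (pattern_length p)"
proof -
  define T where "T = {t\<in>{- int k..int k}. (\<forall>i\<in>pattern_domain p. t + i \<in> {- int k..int k}) \<and> occurs_at Y p t}"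
  define S where "S = {t\<in>{- int k..int k}. occurs_at Y p t}"
  define E where "E = {int k - int (pattern_length p) + 1 .. int k}"
  have fin: "finite {t \<in> {- int k..int k}. Q t}" for Q
    by (rule finite_subset[of _ "{- int k..int k}"]) auto
  have sum_eq: "(\<Sum>t\<in>{- int k..int k}. of_bool (occurs_at Y p t)) = real (card S)"
  proof -
    have "S = {- int k..int k} \<inter> {t. occurs_at Y p t}" by (auto simp: S_def)
    then show ?thesis by simp
  qed
  have occ_eq: "occurrences Y p k = card T" unfolding T_def by (rule occurrences_eq_card[OF v])
  have "S \<subseteq> T \<union> E"
  proof
    fix t assume t: "t \<in> S"
    show "t \<in> T \<union> E"
    proof (cases "\<forall>i\<in>pattern_domain p. t + i \<in> {- int k..int k}")
      case True then show ?thesis using t by (auto simp: T_def S_def)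
    next
      case False
      then obtain i where i: "i \<in> pattern_domain p" "t + i \<notin> {- int k..int k}" by auto
      have "0 \<le> i" "i \<le> Max (pattern_domain p)" using v i(1) by (auto simp: normalized_pattern_def)
      then show ?thesis using i(2) t by (auto simp: E_def S_def pattern_length_def)
    qed
  qed
  then have "card S \<le> card (T \<union> E)"
    by (rule card_mono[rotated]) (unfold T_def E_def, intro finite_UnI fin finite_atLeastAtMost_int)
  also have "\<dots> \<le> card T + card E" by (rule card_Un_le)
  finally have "card S \<le> card T + pattern_length p" by (simp add: E_def)
  moreover have "card T \<le> card S" using fin[of "occurs_at Y p"] by (intro card_mono) (auto simp: T_def S_def)
  ultimately show "real (occurrences Y p k) \<le> (\<Sum>t\<in>{- int k..int k}. of_bool (occurs_at Y p t))"
    and "(\<Sum>t\<in>{- int k..int k}. of_bool (occurs_at Y p t)) \<le> real (occurrences Y p k) + real (pattern_length p)"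
    unfolding sum_eq occ_eq by simp_all
qed

definition segment_supports :: "nat \<Rightarrow> int set set" where
  "segment_supports k = {A. A \<subseteq> {- int k..int k} \<and> A \<noteq> {}}"

lemma finite_segment_supports: "finite (segment_supports k)"
proof -
  have "segment_supports k \<subseteq> Pow {- int k..int k}" by (auto simp: segment_supports_def)
  then show ?thesis by (rule finite_subset) simp
qed

lemma seg_energy_eq_sum_supports: "seg_energy \<Phi> Y k = (\<Sum>A\<in>segment_supports k. \<Phi> (pattern_of Y A))"
  by (simp add: seg_energy_def segment_supports_def)

lemma seg_energy_perturbation:
  fixes \<Phi> H :: "pattern \<Rightarrow> real"
  assumes finP: "finite P" and out: "\<And>q. q \<notin> P \<Longrightarrow> \<Phi> q = H q"
  shows "seg_energy \<Phi> Y k = seg_energy H Y k + (\<Sum>p\<in>P. (\<Phi> p - H p) * real (occurrences Y p k))"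
proof -
  define \<delta> where "\<delta> q = \<Phi> q - H q" for q
  have d0: "\<delta> q = 0" if "q \<notin> P" for q using out[OF that] by (simp add: \<delta>_def)
  have pt: "\<delta> q = (\<Sum>p\<in>P. if q = p then \<delta> p else 0)" for q
    using finP d0 by (cases "q \<in> P") (simp_all add: sum.delta)
  have "seg_energy \<Phi> Y k = seg_energy H Y k + (\<Sum>A\<in>segment_supports k. \<delta> (pattern_of Y A))"
    unfolding seg_energy_eq_sum_supports \<delta>_def by (simp add: sum.distrib[symmetric])
  also have "(\<Sum>A\<in>segment_supports k. \<delta> (pattern_of Y A)) = (\<Sum>A\<in>segment_supports k. \<Sum>p\<in>P. if pattern_of Y A = p then \<delta> p else 0)"
    by (rule sum.cong[OF refl]) (rule pt)
  also have "\<dots> = (\<Sum>p\<in>P. \<Sum>A\<in>segment_supports k. if pattern_of Y A = p then \<delta> p else 0)" by (rule sum.swap)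
  also have "\<dots> = (\<Sum>p\<in>P. \<delta> p * real (occurrences Y p k))"
  proof (rule sum.cong[OF refl])
    fix p
    have "(\<Sum>A\<in>{A\<in>segment_supports k. pattern_of Y A = p}. \<delta> p) = (\<Sum>A\<in>segment_supports k. if pattern_of Y A = p then \<delta> p else 0)"
      by (rule sum.inter_filter[OF finite_segment_supports])
    then have "(\<Sum>A\<in>segment_supports k. if pattern_of Y A = p then \<delta> p else 0) = (\<Sum>A\<in>{A\<in>segment_supports k. pattern_of Y A = p}. \<delta> p)"
      by simp
    also have "\<dots> = \<delta> p * real (card {A\<in>segment_supports k. pattern_of Y A = p})" by simp
    also have "{A\<in>segment_supports k. pattern_of Y A = p} = {A. A \<subseteq> {- int k..int k} \<and> A \<noteq> {} \<and> pattern_of Y A = p}"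
      by (auto simp: segment_supports_def)
    finally show "(\<Sum>A\<in>segment_supports k. if pattern_of Y A = p then \<delta> p else 0) = \<delta> p * real (occurrences Y p k)"
      by (simp add: occurrences_def)
  qed
  finally show ?thesis by (simp add: \<delta>_def)
qed

section \<open>Sturmian words as codings of rotations\<close>

definition rotation_coding :: "real \<Rightarrow> real \<Rightarrow> nat" where
  "rotation_coding \<beta> z = (if frac z < \<beta> then 0 else 1)"

definition matches_coding :: "pattern \<Rightarrow> real \<Rightarrow> real \<Rightarrow> bool" where
  "matches_coding p \<beta> z \<longleftrightarrow> (\<forall>i\<in>pattern_domain p. p i = Some (rotation_coding \<beta> (z + of_int i * \<beta>)))"

lemma sturmian_rotation_coding:
  assumes "sturmian \<beta> Y"
  obtains x where "\<And>n. frac (x + of_int n * \<beta>) \<notin> {0, \<beta>} \<Longrightarrow> Y n = rotation_coding \<beta> (x + of_int n * \<beta>)"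
proof -
  obtain x where x: "(\<forall>n. Y n = (if frac (x + of_int n * \<beta>) \<in> {0..<\<beta>} then 0 else 1)) \<or>
      (\<forall>n. Y n = (if frac (x + of_int n * \<beta>) \<in> {0<..\<beta>} then 0 else 1))"
    using assms unfolding sturmian_def by blast
  have "Y n = rotation_coding \<beta> (x + of_int n * \<beta>)" if h: "frac (x + of_int n * \<beta>) \<notin> {0, \<beta>}" for n
  proof -
    have "frac (x + of_int n * \<beta>) \<ge> 0" by simp
    then show ?thesis using x h by (auto simp: less_le rotation_coding_def)
  qed
  then show ?thesis by (rule that)
qed

lemma occurs_at_iff_matches_coding:
  assumes Y: "\<And>n. frac (x + of_int n * \<beta>) \<notin> {0, \<beta>} \<Longrightarrow> Y n = rotation_coding \<beta> (x + of_int n * \<beta>)"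
    and t: "\<And>i. i \<in> pattern_domain p \<Longrightarrow> frac (x + of_int (t + i) * \<beta>) \<notin> {0, \<beta>}"
  shows "occurs_at Y p t \<longleftrightarrow> matches_coding p \<beta> (x + of_int t * \<beta>)"
  unfolding occurs_at_def matches_coding_def
proof (intro ball_cong refl)
  fix i assume i: "i \<in> pattern_domain p"
  have e: "x + of_int t * \<beta> + of_int i * \<beta> = x + of_int (t + i) * \<beta>" by (simp add: algebra_simps)
  show "(p i = Some (Y (t + i))) = (p i = Some (rotation_coding \<beta> (x + of_int t * \<beta> + of_int i * \<beta>)))"
    unfolding e using Y[OF t[OF i]] by simp
qed

lemma window_sum_occurs_at_coding:
  fixes \<beta> x :: real
  assumes irr: "\<beta> \<notin> \<rat>" and v: "normalized_pattern p"
    and Y: "\<And>n. frac (x + of_int n * \<beta>) \<notin> {0, \<beta>} \<Longrightarrow> Y n = rotation_coding \<beta> (x + of_int n * \<beta>)"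
  shows "\<bar>(\<Sum>t\<in>{- int k..int k}. of_bool (occurs_at Y p t))
      - (\<Sum>t\<in>{- int k..int k}. of_bool (matches_coding p \<beta> (x + of_int t * \<beta>)))\<bar>
    \<le> 2 * real (card (pattern_domain p))"
proof -
  define bad where "bad i t \<longleftrightarrow> frac (x + of_int (t + i) * \<beta>) \<in> {0, \<beta>}" for i t
  have finD: "finite (pattern_domain p)" using v by (simp add: normalized_pattern_def)
  have pt: "\<bar>of_bool (occurs_at Y p t) - of_bool (matches_coding p \<beta> (x + of_int t * \<beta>))\<bar>
      \<le> (\<Sum>i\<in>pattern_domain p. of_bool (bad i t) :: real)" for t
  proof (cases "\<exists>i\<in>pattern_domain p. bad i t")
    case True
    then obtain i where "i \<in> pattern_domain p" "bad i t" by blast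
    then have "(1::real) \<le> (\<Sum>i\<in>pattern_domain p. of_bool (bad i t))"
      using member_le_sum[of i "pattern_domain p" "\<lambda>i. of_bool (bad i t) :: real"] finD by simp
    then show ?thesis by (simp add: of_bool_def)
  next
    case False
    then have "occurs_at Y p t \<longleftrightarrow> matches_coding p \<beta> (x + of_int t * \<beta>)"
      by (intro occurs_at_iff_matches_coding[OF Y]) (auto simp: bad_def)
    then show ?thesis by (simp add: sum_nonneg)
  qed
  have bad_le: "(\<Sum>t\<in>{- int k..int k}. of_bool (bad i t)) \<le> (2::real)" for i
  proof -
    have e: "x + of_int (t + i) * \<beta> = (x + of_int i * \<beta>) + of_int t * \<beta>" for t by (simp add: algebra_simps)
    have "(\<Sum>t\<in>{- int k..int k}. of_bool (bad i t)) \<le> (\<Sum>t\<in>{- int k..int k}. (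
        of_bool (frac ((x + of_int i * \<beta>) + of_int t * \<beta>) = 0) + of_bool (frac ((x + of_int i * \<beta>) + of_int t * \<beta>) = \<beta>) :: real))"
      unfolding bad_def e by (intro sum_mono) auto
    also have "\<dots> \<le> 1 + 1"
      unfolding sum.distrib by (intro add_mono window_sum_rotation_point_le_1[OF irr])
    finally show ?thesis by simp
  qed
  have "\<bar>(\<Sum>t\<in>{- int k..int k}. of_bool (occurs_at Y p t))
      - (\<Sum>t\<in>{- int k..int k}. of_bool (matches_coding p \<beta> (x + of_int t * \<beta>)))\<bar>
    \<le> (\<Sum>t\<in>{- int k..int k}. \<bar>of_bool (occurs_at Y p t) - of_bool (matches_coding p \<beta> (x + of_int t * \<beta>))\<bar> :: real)"
    unfolding sum_subtractf[symmetric] by (rule sum_abs)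
  also have "\<dots> \<le> (\<Sum>i\<in>pattern_domain p. \<Sum>t\<in>{- int k..int k}. of_bool (bad i t))"
    using pt by (subst sum.swap) (rule sum_mono)
  also have "\<dots> \<le> (\<Sum>i\<in>pattern_domain p. 2)" by (intro sum_mono bad_le)
  finally show ?thesis by simp
qed

lemma frac_less_switch:
  fixes u u' a \<phi> :: real
  assumes u: "0 \<le> u" "u < u'" "u' < 1"
    and no: "\<not> (u < frac (- a) \<and> frac (- a) \<le> u')" "\<not> (u < frac (\<phi> - a) \<and> frac (\<phi> - a) \<le> u')"
  shows "frac (u + a) < \<phi> \<longleftrightarrow> frac (u' + a) < \<phi>"
proof (cases "\<lfloor>u + a\<rfloor> = \<lfloor>u' + a\<rfloor>")
  case False
  then have lt: "\<lfloor>u + a\<rfloor> + 1 \<le> \<lfloor>u' + a\<rfloor>" using floor_mono[of "u + a" "u' + a"] u by simp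
  define c where "c = of_int \<lfloor>u' + a\<rfloor> - a"
  have "u + a < of_int \<lfloor>u + a\<rfloor> + 1" by simp
  also have "\<dots> \<le> of_int \<lfloor>u' + a\<rfloor>" using lt by (metis of_int_add of_int_le_iff of_int_1)
  finally have c1: "u < c" by (simp add: c_def)
  have c2: "c \<le> u'" using of_int_floor_le[of "u' + a"] unfolding c_def by linarith
  have "frac c = c" using c1 c2 u by (simp add: frac_eq)
  moreover have "frac c = frac (- a)"
    unfolding c_def by (metis frac_add_of_int_right uminus_add_conv_diff add.commute)
  ultimately show ?thesis using no(1) c1 c2 by simp
next
  case True
  have fd: "frac (u' + a) = frac (u + a) + (u' - u)" using True by (simp add: frac_def)
  show ?thesis
  proof (rule ccontr)
    assume "\<not> (frac (u + a) < \<phi> \<longleftrightarrow> frac (u' + a) < \<phi>)"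
    then have h: "frac (u + a) < \<phi>" "\<phi> \<le> frac (u' + a)" using fd u by auto
    define c where "c = u + (\<phi> - frac (u + a))"
    have c1: "u < c" "c \<le> u'" using h fd by (auto simp: c_def)
    have "c = \<phi> - a + of_int \<lfloor>u + a\<rfloor>" by (simp add: c_def frac_def)
    then have "frac c = frac (\<phi> - a)" by (metis frac_add_of_int_right)
    moreover have "frac c = c" using c1 u by (simp add: frac_eq)
    ultimately show False using no(2) c1 by simp
  qed
qed

lemma matches_coding_switches:
  fixes \<phi> u u' :: real
  assumes u: "0 \<le> u" "u < u'" "u' < 1"
    and no: "\<forall>c\<in>(\<lambda>i. frac (- of_int i * \<phi>)) ` pattern_domain p \<union> (\<lambda>i. frac (\<phi> - of_int i * \<phi>)) ` pattern_domain p.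
      \<not> (u < c \<and> c \<le> u')"
  shows "matches_coding p \<phi> u \<longleftrightarrow> matches_coding p \<phi> u'"
  unfolding matches_coding_def rotation_coding_def
proof (intro ball_cong refl)
  fix i assume "i \<in> pattern_domain p"
  then have "frac (u + of_int i * \<phi>) < \<phi> \<longleftrightarrow> frac (u' + of_int i * \<phi>) < \<phi>"
    using no by (intro frac_less_switch[OF u]) auto
  then show "(p i = Some (if frac (u + of_int i * \<phi>) < \<phi> then 0 else 1)) =
      (p i = Some (if frac (u' + of_int i * \<phi>) < \<phi> then 0 else 1))"
    by simp
qed

lemma switches_only_at_matches_coding:
  "switches_only_at (matches_coding p \<phi>)
     ((\<lambda>i. frac (- of_int i * \<phi>)) ` pattern_domain p \<union> (\<lambda>i. frac (\<phi> - of_int i * \<phi>)) ` pattern_domain p)"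
proof -
  have "frac (z + of_int i * \<phi>) = frac (frac z + of_int i * \<phi>)" for z i
    by (simp add: frac_add_frac)
  then have "matches_coding p \<phi> z = matches_coding p \<phi> (frac z)" for z
    unfolding matches_coding_def rotation_coding_def by simp
  then show ?thesis
    unfolding switches_only_at_def using matches_coding_switches by blast
qed

definition pattern_frequency :: "real \<Rightarrow> pattern \<Rightarrow> real" where
  "pattern_frequency \<phi> p = (if normalized_pattern p then (SOME A. \<forall>\<beta> x. \<beta> \<notin> \<rat> \<longrightarrow>
     window_mean (\<lambda>t. of_bool (matches_coding p \<phi> (x + of_int t * \<beta>))) \<longlonglongrightarrow> A) else 0)"

lemma window_mean_matches_coding:
  assumes "normalized_pattern p" and "\<beta> \<notin> \<rat>"
  shows "window_mean (\<lambda>t. of_bool (matches_coding p \<phi> (x + of_int t * \<beta>))) \<longlonglongrightarrow> pattern_frequency \<phi> p"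
proof -
  have "finite ((\<lambda>i. frac (- of_int i * \<phi>)) ` pattern_domain p \<union> (\<lambda>i. frac (\<phi> - of_int i * \<phi>)) ` pattern_domain p)"
    using assms(1) by (simp add: normalized_pattern_def)
  from rotation_frequency_exists[OF switches_only_at_matches_coding this]
  have "\<forall>\<beta> x. \<beta> \<notin> \<rat> \<longrightarrow> window_mean (\<lambda>t. of_bool (matches_coding p \<phi> (x + of_int t * \<beta>)))
      \<longlonglongrightarrow> pattern_frequency \<phi> p"
    unfolding pattern_frequency_def using assms(1) by (simp only: if_True) (rule someI_ex)
  then show ?thesis using assms(2) by blast
qed

lemma sturmian_occurrence_frequency:
  assumes irr: "\<beta> \<notin> \<rat>" and Y: "sturmian \<beta> Y"
  shows "(\<lambda>k. real (occurrences Y p k) / (2 * real k + 1)) \<longlonglongrightarrow> pattern_frequency \<beta> p"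
proof (cases "normalized_pattern p")
  case True
  obtain x where x: "\<And>n. frac (x + of_int n * \<beta>) \<notin> {0, \<beta>} \<Longrightarrow> Y n = rotation_coding \<beta> (x + of_int n * \<beta>)"
    using sturmian_rotation_coding[OF Y] by blast
  let ?M = "\<lambda>k. \<Sum>t\<in>{- int k..int k}. of_bool (matches_coding p \<beta> (x + of_int t * \<beta>))"
  show ?thesis
  proof (rule tendsto_divide_window_bounded_diff)
    show "(\<lambda>k. ?M k / (2 * real k + 1)) \<longlonglongrightarrow> pattern_frequency \<beta> p"
      using window_mean_matches_coding[OF True irr] unfolding window_mean_def .
    fix k
    have "real (occurrences Y p k) \<le> (\<Sum>t\<in>{- int k..int k}. of_bool (occurs_at Y p t))"
      "(\<Sum>t\<in>{- int k..int k}. of_bool (occurs_at Y p t)) \<le> real (occurrences Y p k) + real (pattern_length p)"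
      by (rule occurrences_window_bounds[OF True])+
    moreover have "\<bar>(\<Sum>t\<in>{- int k..int k}. of_bool (occurs_at Y p t)) - ?M k\<bar> \<le> 2 * real (card (pattern_domain p))"
      by (rule window_sum_occurs_at_coding[OF irr True x])
    ultimately show "\<bar>real (occurrences Y p k) - ?M k\<bar> \<le> real (pattern_length p) + 2 * real (card (pattern_domain p))"
      unfolding abs_le_iff by linarith
  qed
next
  case False
  then show ?thesis by (simp add: occurrences_not_normalized pattern_frequency_def)
qed

section \<open>Changing the slope from \<open>\<phi>\<close> to \<open>\<phi> - 1/n\<close>\<close>

lemma coding_change_near_discontinuity:
  fixes w \<phi> \<delta> e :: real
  assumes d: "0 \<le> \<delta>" and e: "0 < e"
    and diff: "(frac (w - \<delta>) < \<phi> - e) \<noteq> (frac w < \<phi>)"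
  shows "frac (w + (\<delta> + e)) < 3 * (\<delta> + e) \<or> frac (w - \<phi> + (\<delta> + e)) < 3 * (\<delta> + e)"
proof (cases "3 * (\<delta> + e) \<ge> 1")
  case True then show ?thesis using frac_lt_1[of "w + (\<delta> + e)"] by linarith
next
  case False
  define r where "r = \<delta> + e"
  have r: "3 * r < 1" "0 < r" "\<delta> \<le> r" using False d e by (auto simp: r_def)
  define m where "m = \<lfloor>w\<rfloor>"
  have fw: "frac w = w - of_int m" by (simp add: frac_def m_def)
  have "0 \<le> frac w" by simp
  then have fw01: "0 \<le> w - of_int m" "w - of_int m < 1" using fw frac_lt_1[of w] by linarith+
  have le: "\<lfloor>w - \<delta>\<rfloor> \<le> m" unfolding m_def using d by (intro floor_mono) simp
  show ?thesis
  proof (cases "\<lfloor>w - \<delta>\<rfloor> = m")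
    case False
    then have "\<lfloor>w - \<delta>\<rfloor> < m" using le by simp
    then have lt: "w - \<delta> < of_int m" by (simp add: floor_less_iff)
    have "frac (w + r) = w + r - of_int m"
      by (subst frac_unique_iff) (use lt fw01 r in auto)
    then have "frac (w + r) < 3 * r" using lt r by simp
    then show ?thesis by (simp add: r_def)
  next
    case True
    then have fwd: "frac (w - \<delta>) = frac w - \<delta>" by (simp add: frac_def m_def)
    show ?thesis
    proof (cases "frac w < \<phi>")
      case True
      then have h: "frac w - \<delta> \<ge> \<phi> - e" using diff fwd by auto
      have "frac (w - \<phi> + r) = frac w - \<phi> + r"
        by (subst frac_unique_iff) (use h True fw r d in \<open>auto simp: r_def\<close>)
      then have "frac (w - \<phi> + r) < 3 * r" using True r by simp
      then show ?thesis by (simp add: r_def)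
    next
      case False
      then have h: "frac w - \<delta> < \<phi> - e" "frac w \<ge> \<phi>" using diff fwd by auto
      have "frac (w - \<phi> + r) = frac w - \<phi> + r"
        by (subst frac_unique_iff) (use h fw r d in \<open>auto simp: r_def\<close>)
      then have "frac (w - \<phi> + r) < 3 * r" using h r by (simp add: r_def)
      then show ?thesis by (simp add: r_def)
    qed
  qed
qed

text \<open>The positions \<open>i\<close> at which, by \<open>coding_change_near_discontinuity\<close>, the codings of \<open>z\<close>
  with slopes \<open>\<phi>\<close> and \<open>\<phi> - 1/n\<close> may differ.\<close>

definition slope_change_error :: "pattern \<Rightarrow> real \<Rightarrow> nat \<Rightarrow> real \<Rightarrow> real" where
  "slope_change_error p \<phi> n z = (\<Sum>i\<in>pattern_domain p.
      of_bool (frac (z + of_int i * \<phi> + (of_int i + 1) / real n) < 3 * ((of_int i + 1) / real n)) +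
      of_bool (frac (z + of_int i * \<phi> - \<phi> + (of_int i + 1) / real n) < 3 * ((of_int i + 1) / real n)))"

lemma slope_change_error_nonneg: "normalized_pattern p \<Longrightarrow> 0 \<le> slope_change_error p \<phi> n z"
  unfolding slope_change_error_def by (intro sum_nonneg add_nonneg_nonneg) simp_all

lemma matches_coding_slope_change:
  fixes \<phi> z :: real and n :: nat
  assumes v: "normalized_pattern p" and n: "n > 0"
  shows "\<bar>of_bool (matches_coding p (\<phi> - 1 / real n) z) - of_bool (matches_coding p \<phi> z)\<bar>
    \<le> slope_change_error p \<phi> n z"
proof (cases "matches_coding p (\<phi> - 1 / real n) z = matches_coding p \<phi> z")
  case True then show ?thesis using slope_change_error_nonneg[OF v] by simp
next
  case False
  have finD: "finite (pattern_domain p)" and nn: "\<And>i. i \<in> pattern_domain p \<Longrightarrow> 0 \<le> i"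
    using v by (auto simp: normalized_pattern_def)
  have "\<exists>i\<in>pattern_domain p.
      (frac (z + of_int i * (\<phi> - 1 / real n)) < \<phi> - 1 / real n) \<noteq> (frac (z + of_int i * \<phi>) < \<phi>)"
  proof (rule ccontr)
    assume "\<not> ?thesis"
    then have "matches_coding p (\<phi> - 1 / real n) z = matches_coding p \<phi> z"
      unfolding matches_coding_def rotation_coding_def by auto
    then show False using False by simp
  qed
  then obtain i where i: "i \<in> pattern_domain p"
    and d: "(frac (z + of_int i * (\<phi> - 1 / real n)) < \<phi> - 1 / real n) \<noteq> (frac (z + of_int i * \<phi>) < \<phi>)"
    by blast
  define w where "w = z + of_int i * \<phi>"
  define \<delta> where "\<delta> = of_int i / real n"
  define e where "e = 1 / real n"
  have ed: "0 \<le> \<delta>" "0 < e" using nn[OF i] n by (auto simp: \<delta>_def e_def)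
  have w1: "z + of_int i * (\<phi> - 1 / real n) = w - \<delta>" by (simp add: w_def \<delta>_def algebra_simps)
  have de: "\<delta> + e = (of_int i + 1) / real n" by (simp add: \<delta>_def e_def add_divide_distrib)
  have "(frac (w - \<delta>) < \<phi> - e) \<noteq> (frac w < \<phi>)" using d unfolding w1 by (simp add: w_def e_def)
  from coding_change_near_discontinuity[OF ed this]
  have "frac (w + (\<delta> + e)) < 3 * (\<delta> + e) \<or> frac (w - \<phi> + (\<delta> + e)) < 3 * (\<delta> + e)" .
  then have "(1::real) \<le>
      of_bool (frac (z + of_int i * \<phi> + (of_int i + 1) / real n) < 3 * ((of_int i + 1) / real n)) +
      of_bool (frac (z + of_int i * \<phi> - \<phi> + (of_int i + 1) / real n) < 3 * ((of_int i + 1) / real n))"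
    unfolding de w_def by (auto simp: of_bool_def)
  also have "\<dots> \<le> slope_change_error p \<phi> n z" unfolding slope_change_error_def
    by (rule member_le_sum[OF i _ finD]) (intro add_nonneg_nonneg; simp)
  finally show ?thesis by (simp add: of_bool_def)
qed

lemma window_mean_rotation_frac_less:
  fixes \<beta> x c b :: real
  assumes irr: "\<beta> \<notin> \<rat>" and b: "b \<ge> 0"
  shows "window_mean (\<lambda>t. of_bool (frac (x + of_int t * \<beta> + c) < b)) \<longlonglongrightarrow> min 1 b"
proof -
  have "frac (x + of_int t * \<beta> + c) < b \<longleftrightarrow> frac ((x + c) + of_int t * \<beta>) \<in> {0..<min 1 b}" for t
  proof -
    have e: "x + of_int t * \<beta> + c = (x + c) + of_int t * \<beta>" by simp
    show ?thesis unfolding e using frac_lt_1[of "(x + c) + of_int t * \<beta>"] by auto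
  qed
  moreover have "window_mean (\<lambda>t. of_bool (frac ((x + c) + of_int t * \<beta>) \<in> {0..<min 1 b})) \<longlonglongrightarrow> min 1 b - 0"
    by (rule window_mean_rotation_interval[OF irr]) (use b in auto)
  ultimately show ?thesis by simp
qed

definition slope_change_error_limit :: "pattern \<Rightarrow> nat \<Rightarrow> real" where
  "slope_change_error_limit p n = (\<Sum>i\<in>pattern_domain p. 2 * min 1 (3 * ((of_int i + 1) / real n)))"

lemma window_mean_slope_change_error:
  fixes \<psi> \<phi> x :: real
  assumes irr: "\<psi> \<notin> \<rat>" and v: "normalized_pattern p" and n: "n > 0"
  shows "window_mean (\<lambda>t. slope_change_error p \<phi> n (x + of_int t * \<psi>)) \<longlonglongrightarrow> slope_change_error_limit p n"
proof -
  have "window_mean (\<lambda>t. of_bool (frac (x + of_int t * \<psi> + of_int i * \<phi> + (of_int i + 1) / real n) < 3 * ((of_int i + 1) / real n))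
      + of_bool (frac (x + of_int t * \<psi> + of_int i * \<phi> - \<phi> + (of_int i + 1) / real n) < 3 * ((of_int i + 1) / real n)))
    \<longlonglongrightarrow> 2 * min 1 (3 * ((of_int i + 1) / real n))" if i: "i \<in> pattern_domain p" for i
  proof -
    have b: "3 * ((of_int i + 1) / real n) \<ge> 0" using v i n by (simp add: normalized_pattern_def)
    have "x + of_int t * \<psi> + of_int i * \<phi> + (of_int i + 1) / real n
        = x + of_int t * \<psi> + (of_int i * \<phi> + (of_int i + 1) / real n)"
      "x + of_int t * \<psi> + of_int i * \<phi> - \<phi> + (of_int i + 1) / real n
        = x + of_int t * \<psi> + (of_int i * \<phi> - \<phi> + (of_int i + 1) / real n)" for t
      by simp_all
    then show ?thesis
      unfolding window_mean_add mult_2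
      by (simp only:) (intro tendsto_add window_mean_rotation_frac_less[OF irr b])
  qed
  then show ?thesis
    unfolding slope_change_error_def slope_change_error_limit_def window_mean_sum by (rule tendsto_sum)
qed

lemma slope_change_error_limit_le:
  assumes v: "normalized_pattern p" and n: "n > 0"
  shows "slope_change_error_limit p n \<le> 6 * real (pattern_size p) / real n"
proof -
  have "2 * min 1 (3 * ((of_int i + 1) / real n)) \<le> 6 * real (pattern_length p + 1) / real n"
    if i: "i \<in> pattern_domain p" for i
  proof -
    have "i \<le> Max (pattern_domain p)" "0 \<le> i" using v i by (auto simp: normalized_pattern_def)
    then have "of_int i + 1 \<le> real (pattern_length p + 1)" by (simp add: pattern_length_def)
    then have "6 * ((of_int i + 1) / real n) \<le> 6 * (real (pattern_length p + 1) / real n)"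
      using n by (intro mult_left_mono divide_right_mono) auto
    moreover have "2 * min 1 (3 * ((of_int i + 1) / real n)) \<le> 6 * ((of_int i + 1) / real n)"
      by linarith
    ultimately show ?thesis by simp
  qed
  then have "slope_change_error_limit p n \<le> (\<Sum>i\<in>pattern_domain p. 6 * real (pattern_length p + 1) / real n)"
    unfolding slope_change_error_limit_def by (rule sum_mono)
  then show ?thesis by (simp add: pattern_size_def algebra_simps)
qed

lemma occurrences_slope_change:
  fixes \<phi> x :: real and n :: nat
  defines "\<psi> \<equiv> \<phi> - 1 / real n"
  assumes irr: "\<psi> \<notin> \<rat>" and v: "normalized_pattern p" and n: "n > 0"
    and W: "\<And>j. frac (x + of_int j * \<psi>) \<notin> {0, \<psi>} \<Longrightarrow> W j = rotation_coding \<psi> (x + of_int j * \<psi>)"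
  shows "\<bar>real (occurrences W p k) - (\<Sum>t\<in>{- int k..int k}. of_bool (matches_coding p \<phi> (x + of_int t * \<psi>)))\<bar>
          \<le> (\<Sum>t\<in>{- int k..int k}. slope_change_error p \<phi> n (x + of_int t * \<psi>))
             + (real (pattern_length p) + 2 * real (card (pattern_domain p)))"
proof -
  have occ: "real (occurrences W p k) \<le> (\<Sum>t\<in>{- int k..int k}. of_bool (occurs_at W p t))"
    "(\<Sum>t\<in>{- int k..int k}. of_bool (occurs_at W p t)) \<le> real (occurrences W p k) + real (pattern_length p)"
    by (rule occurrences_window_bounds[OF v])+
  have coding: "\<bar>(\<Sum>t\<in>{- int k..int k}. of_bool (occurs_at W p t))
      - (\<Sum>t\<in>{- int k..int k}. of_bool (matches_coding p \<psi> (x + of_int t * \<psi>)))\<bar>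
      \<le> 2 * real (card (pattern_domain p))"
    by (rule window_sum_occurs_at_coding[OF irr v W])
  have "\<bar>(\<Sum>t\<in>{- int k..int k}. of_bool (matches_coding p \<psi> (x + of_int t * \<psi>)))
      - (\<Sum>t\<in>{- int k..int k}. of_bool (matches_coding p \<phi> (x + of_int t * \<psi>)))\<bar>
      = (\<bar>\<Sum>t\<in>{- int k..int k}. of_bool (matches_coding p \<psi> (x + of_int t * \<psi>))
           - of_bool (matches_coding p \<phi> (x + of_int t * \<psi>))\<bar> :: real)"
    by (simp only: sum_subtractf)
  also have "\<dots> \<le> (\<Sum>t\<in>{- int k..int k}. \<bar>of_bool (matches_coding p \<psi> (x + of_int t * \<psi>))
      - of_bool (matches_coding p \<phi> (x + of_int t * \<psi>))\<bar>)"
    by (rule sum_abs)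
  also have "\<dots> \<le> (\<Sum>t\<in>{- int k..int k}. slope_change_error p \<phi> n (x + of_int t * \<psi>))"
    unfolding \<psi>_def by (rule sum_mono) (rule matches_coding_slope_change[OF v n])
  finally show ?thesis using occ coding unfolding abs_le_iff by linarith
qed

section \<open>Forbidden distances that are almost periods of \<open>\<phi> - 1/n\<close>\<close>

definition good_distance :: "real \<Rightarrow> nat \<Rightarrow> nat \<Rightarrow> bool" where
  "good_distance \<phi> n d \<longleftrightarrow> d \<in> forbidden \<phi> \<and> frac (real d * (\<phi> - 1 / real n)) \<le> (1 - \<phi>) / 2"

text \<open>Writing \<open>d = q n + r\<close>, the points \<open>d \<phi>\<close> and \<open>d (\<phi> - 1/n)\<close> differ by \<open>r/n\<close> mod 1.\<close>

lemma good_distanceI: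
  fixes \<phi> :: real and n d q r :: nat
  assumes ph: "0 < \<phi>" and n: "n > 0" and d: "d = q * n + r" "d \<ge> 1"
    and u: "1 - \<phi> \<le> frac (real d * \<phi>)" "frac (real d * \<phi>) \<le> \<phi>"
    and r: "real r / real n \<le> frac (real d * \<phi>)" "frac (real d * \<phi>) \<le> real r / real n + (1 - \<phi>) / 2"
  shows "good_distance \<phi> n d"
proof -
  define u where "u = frac (real d * \<phi>)"
  have "real d / real n = real q + real r / real n" using n by (simp add: d(1) field_simps)
  then have "real d * (\<phi> - 1 / real n) = (u - real r / real n) + of_int (\<lfloor>real d * \<phi>\<rfloor> - int q)"
    by (simp add: u_def frac_def algebra_simps)
  then have "frac (real d * (\<phi> - 1 / real n)) = frac (u - real r / real n)"
    by (simp only: frac_add_of_int_right)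
  also have "\<dots> = u - real r / real n"
  proof -
    have "(1 - \<phi>) / 2 < 1" using ph by simp
    then show ?thesis using r unfolding u_def[symmetric] by (intro frac_eq[THEN iffD2] conjI) linarith+
  qed
  finally have "frac (real d * (\<phi> - 1 / real n)) \<le> (1 - \<phi>) / 2" using r(2) unfolding u_def by linarith
  then show ?thesis using u d(2) by (simp add: good_distance_def forbidden_def)
qed

lemma good_distance_exists:
  fixes \<phi> :: real and n :: nat
  assumes irr: "\<phi> \<notin> \<rat>" and ph: "1/2 < \<phi>" "\<phi> < 1" and n: "n \<ge> 1" "\<phi> - 1 / real n > 0"
  obtains d where "good_distance \<phi> n d"
proof -
  define \<gamma> where "\<gamma> = (1 - \<phi>) / 2"
  have n2: "n \<ge> 2"
  proof (rule ccontr)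
    assume "\<not> n \<ge> 2" then have "n = 1" using n by simp
    then show False using n ph by simp
  qed
  define r where "r = n div 2"
  have r1: "r \<ge> 1" using n2 by (simp add: r_def)
  have rn: "real r / real n \<le> 1/2" "real r / real n \<ge> 1/2 - 1 / (2 * real n)"
  proof -
    have "2 * r \<le> n" "n \<le> 2 * r + 1" by (simp_all add: r_def)
    then have a: "2 * real r \<le> real n" "real n \<le> 2 * real r + 1" by linarith+
    show "real r / real n \<le> 1/2" using a n2 by (simp add: field_simps)
    have e1: "1/2 - 1 / (2 * real n) = (real n - 1) / (2 * real n)" using n2 by (simp add: field_simps)
    have "(real n - 1) / (2 * real n) \<le> (2 * real r) / (2 * real n)" using a n2 by (intro divide_right_mono) auto
    also have "\<dots> = real r / real n" using n2 by simp
    finally show "real r / real n \<ge> 1/2 - 1 / (2 * real n)" using e1 by simp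
  qed
  define lo where "lo = max (real r / real n) (1 - \<phi>)"
  define hi where "hi = min (real r / real n + \<gamma>) \<phi>"
  have "1 - \<phi> < real r / real n + \<gamma>"
    using rn(2) n(2) by (simp add: \<gamma>_def field_simps)
  moreover have "real r / real n < \<phi>" using rn(1) ph(1) by linarith
  moreover have "1 - \<phi> < \<phi>" "\<gamma> > 0" using ph unfolding \<gamma>_def by auto
  ultimately have lohi: "lo < hi" unfolding lo_def hi_def by simp
  have lo0: "lo \<ge> 0" "hi \<le> 1" using ph by (auto simp: lo_def hi_def)
  have irr_n: "real n * \<phi> \<notin> \<rat>"
  proof
    assume "real n * \<phi> \<in> \<rat>"
    then have "real n * \<phi> / real n \<in> \<rat>" by (rule Rats_divide) simp
    then show False using irr n by simp
  qed
  obtain t :: nat where t: "frac (real r * \<phi> + real t * (real n * \<phi>)) \<in> {2/3 * lo + 1/3 * hi..<1/3 * lo + 2/3 * hi}"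
    using rotation_hits_interval[OF irr_n, of "2/3 * lo + 1/3 * hi" "1/3 * lo + 2/3 * hi" "real r * \<phi>"]
    lohi lo0 by fastforce
  define d where "d = t * n + r"
  have "real d * \<phi> = real r * \<phi> + real t * (real n * \<phi>)" by (simp add: d_def algebra_simps)
  then have "lo < frac (real d * \<phi>)" "frac (real d * \<phi>) < hi" using t lohi by auto
  then have "good_distance \<phi> n d"
    using good_distanceI[OF _ _ d_def] r1 n ph by (simp add: lo_def hi_def \<gamma>_def d_def)
  then show ?thesis by (rule that)
qed

lemma good_distance_near_half:
  fixes \<phi> \<eta> :: real and n r :: nat
  assumes eta: "0 < \<eta>" "\<eta> \<le> (1 - \<phi>) / 2" "\<eta> \<le> \<phi> - 1/2" and n: "n > 0"
    and r: "real n * (1/2 - \<eta>/2) \<le> real r" "real r < real n / 2"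
    and u: "1/2 \<le> frac (real (n + r) * \<phi>)" "frac (real (n + r) * \<phi>) < 1/2 + \<eta>/2"
  shows "good_distance \<phi> n (n + r)"
proof (rule good_distanceI[where q = 1 and r = r])
  have "1/2 - \<eta>/2 \<le> real r / real n" "real r / real n < 1/2"
    using r n by (simp_all add: field_simps)
  then show "real r / real n \<le> frac (real (n + r) * \<phi>)"
    "frac (real (n + r) * \<phi>) \<le> real r / real n + (1 - \<phi>) / 2"
    using u eta by linarith+
  show "1 - \<phi> \<le> frac (real (n + r) * \<phi>)" "frac (real (n + r) * \<phi>) \<le> \<phi>"
    using u eta by linarith+
qed (use eta n in auto)

text \<open>The distances are \<open>d = n + r\<close> with \<open>r/n\<close> just below \<open>1/2\<close> and \<open>frac (d \<phi>)\<close> just above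
  \<open>1/2\<close>; equidistribution of \<open>d \<phi>\<close> over a block of about \<open>\<eta> n / 2\<close> consecutive \<open>d\<close> yields
  many of them.\<close>

lemma good_distances_in_block:
  fixes \<phi> \<eta> :: real and n M0 :: nat
  assumes \<eta>: "0 < \<eta>" "\<eta> \<le> (1 - \<phi>) / 2" "\<eta> \<le> \<phi> - 1/2"
    and M0: "\<And>M x. M \<ge> M0 \<Longrightarrow> \<bar>rotation_hits \<phi> x (1/2) (1/2 + \<eta>/2) M - \<eta> / 2 * real M\<bar> \<le> \<eta>/4 * real M"
    and n: "2 * real M0 + 12 \<le> real n * \<eta>"
  shows "\<exists>D. D \<subseteq> {n..<2*n} \<and> (\<forall>d\<in>D. good_distance \<phi> n d) \<and> \<eta> * \<eta> / 16 * real n \<le> real (card D)"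
proof -
  define h where "h = real n * \<eta>"
  have h: "2 * real M0 + 12 \<le> h" using n by (simp add: h_def)
  then have n1: "n \<ge> 1" by (cases n) (auto simp: h_def)
  define A where "A = real n * (1/2 - \<eta>/2)"
  have "\<eta> \<le> 1" using \<eta> by (simp add: field_simps)
  then have A0: "A \<ge> 0" unfolding A_def by (intro mult_nonneg_nonneg) auto
  define j0 where "j0 = nat \<lceil>A\<rceil>"
  have j0: "A \<le> real j0" "real j0 < A + 1" using A0 ceiling_correct[of A] by (auto simp: j0_def)
  define M where "M = nat (\<lfloor>h / 2\<rfloor> - 1)"
  have M: "h / 2 - 2 \<le> real M" "real M \<le> h / 2 - 1"
  proof -
    have "\<lfloor>h / 2\<rfloor> \<ge> 2" using h by linarith
    then have "real M = of_int \<lfloor>h / 2\<rfloor> - 1" by (simp add: M_def)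
    then show "h / 2 - 2 \<le> real M" "real M \<le> h / 2 - 1" using floor_correct[of "h/2"] by linarith+
  qed
  define J where "J = {t. t < M \<and> frac (real (n + j0) * \<phi> + real t * \<phi>) \<in> {1/2..<1/2 + \<eta>/2}}"
  have cardJ: "real (card J) = rotation_hits \<phi> (real (n + j0) * \<phi>) (1/2) (1/2 + \<eta>/2) M"
    unfolding rotation_hits_def J_def by (simp add: Int_def conj_commute)
  have "M \<ge> M0" using M h by linarith
  from M0[OF this, of "real (n + j0) * \<phi>"]
  have "\<eta> / 4 * real M \<le> real (card J)" unfolding cardJ abs_le_iff by linarith
  moreover have "\<eta> * \<eta> / 16 * real n \<le> \<eta> / 4 * real M"
  proof -
    have "\<eta> * \<eta> / 16 * real n = \<eta> / 4 * (h / 4)" by (simp add: h_def)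
    also have "\<dots> \<le> \<eta> / 4 * real M" using \<eta> M h by (intro mult_left_mono) auto
    finally show ?thesis .
  qed
  moreover have "card ((\<lambda>t. n + (j0 + t)) ` J) = card J" by (rule card_image) (simp add: inj_on_def)
  moreover have jt: "real (j0 + t) < real n / 2" "A \<le> real (j0 + t)" if "t \<in> J" for t
  proof -
    have "t < M" using that by (simp add: J_def)
    then have "real t + 1 \<le> real M" by simp
    moreover have "A = real n / 2 - h / 2" by (simp add: A_def h_def algebra_simps)
    ultimately show "real (j0 + t) < real n / 2" "A \<le> real (j0 + t)" using j0 M by simp_all
  qed
  then have "j0 + t < n" if "t \<in> J" for t
    using jt(1)[OF that] by (simp only: of_nat_less_iff[symmetric])
  then have "(\<lambda>t. n + (j0 + t)) ` J \<subseteq> {n..<2*n}" by auto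
  moreover have "good_distance \<phi> n (n + (j0 + t))" if "t \<in> J" for t
  proof (rule good_distance_near_half[OF \<eta>])
    have "real (n + (j0 + t)) * \<phi> = real (n + j0) * \<phi> + real t * \<phi>" by (simp add: algebra_simps)
    then show "1/2 \<le> frac (real (n + (j0 + t)) * \<phi>)" "frac (real (n + (j0 + t)) * \<phi>) < 1/2 + \<eta>/2"
      using that by (auto simp: J_def)
  qed (use n1 jt[OF that] in \<open>auto simp: A_def\<close>)
  ultimately show ?thesis by (intro exI[of _ "(\<lambda>t. n + (j0 + t)) ` J"]) auto
qed

lemma many_good_distances:
  fixes \<phi> :: real
  assumes irr: "\<phi> \<notin> \<rat>" and ph: "1/2 < \<phi>" "\<phi> < 1"
  obtains c N0 where "c > 0"
    "\<And>n. n \<ge> N0 \<Longrightarrow> \<exists>D. D \<subseteq> {n..<2*n} \<and> (\<forall>d\<in>D. good_distance \<phi> n d) \<and> c * real n \<le> real (card D)"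
proof -
  define \<eta> where "\<eta> = min ((1 - \<phi>) / 2) (\<phi> - 1/2)"
  have \<eta>: "\<eta> > 0" "\<eta> \<le> (1 - \<phi>) / 2" "\<eta> \<le> \<phi> - 1/2"
    using ph unfolding \<eta>_def by (simp_all only: min.cobounded1 min.cobounded2) simp
  obtain M0 where M0: "\<And>M x. M \<ge> M0 \<Longrightarrow>
      \<bar>rotation_hits \<phi> x (1/2) (1/2 + \<eta>/2) M - \<eta> / 2 * real M\<bar> \<le> \<eta>/4 * real M"
    using rotation_hits_uniform[OF irr, of "1/2" "1/2 + \<eta>/2" "\<eta>/4"] \<eta> ph by auto
  have "\<exists>D. D \<subseteq> {n..<2*n} \<and> (\<forall>d\<in>D. good_distance \<phi> n d) \<and> \<eta> * \<eta> / 16 * real n \<le> real (card D)"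
    if "n \<ge> nat \<lceil>(2 * real M0 + 12) / \<eta>\<rceil>" for n
    using that \<eta> by (intro good_distances_in_block[OF \<eta> M0]) (auto simp: field_simps)
  moreover have "\<eta> * \<eta> / 16 > 0" using \<eta> by simp
  ultimately show ?thesis using that by blast
qed

lemma sum_inverse_powr_dyadic:
  fixes \<alpha> :: real
  assumes D: "D \<subseteq> {n..<2*n}" and n: "n \<ge> 1" and \<alpha>: "0 \<le> \<alpha>" "\<alpha> \<le> 2"
  shows "real (card D) / (4 * real n ^ 2) \<le> (\<Sum>d\<in>D. 1 / real d powr \<alpha>)"
proof -
  have "1 / (4 * real n ^ 2) \<le> 1 / real d powr \<alpha>" if "d \<in> D" for d
  proof -
    have d: "1 \<le> real d" "real d \<le> 2 * real n" using D n that by auto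
    have "real d powr \<alpha> \<le> real d powr 2" using d \<alpha> by (intro powr_mono) auto
    also have "\<dots> = real d ^ 2" using d by (simp add: powr_realpow)
    also have "\<dots> \<le> (2 * real n) ^ 2" using d by (intro power_mono) auto
    finally show ?thesis using d by (simp add: frac_le power_mult_distrib)
  qed
  then have "(\<Sum>d\<in>D. 1 / (4 * real n ^ 2)) \<le> (\<Sum>d\<in>D. 1 / real d powr \<alpha>)" by (rule sum_mono)
  then show ?thesis by simp
qed

lemma good_distances_weight:
  fixes \<phi> \<alpha> :: real
  assumes irr: "\<phi> \<notin> \<rat>" and ph: "1/2 < \<phi>" "\<phi> < 1" and \<alpha>: "0 \<le> \<alpha>" "\<alpha> \<le> 2"
  obtains c where "c > 0" "\<And>n. n \<ge> 1 \<Longrightarrow> \<phi> - 1 / real n > 0 \<Longrightarrow>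
    \<exists>D. finite D \<and> (\<forall>d\<in>D. good_distance \<phi> n d) \<and> c / real n \<le> (\<Sum>d\<in>D. 1 / real d powr \<alpha>)"
proof -
  obtain c2 N0 where c2: "c2 > 0" and N0: "\<And>n. n \<ge> N0 \<Longrightarrow>
      \<exists>D. D \<subseteq> {n..<2*n} \<and> (\<forall>d\<in>D. good_distance \<phi> n d) \<and> c2 * real n \<le> real (card D)"
    using many_good_distances[OF irr ph] by blast
  define admissible where "admissible n \<longleftrightarrow> n \<ge> 1 \<and> \<phi> - 1 / real n > 0" for n
  define dsel where "dsel n = (SOME d. good_distance \<phi> n d)" for n
  have dsel: "good_distance \<phi> n (dsel n)" if "admissible n" for n
    using good_distance_exists[OF irr ph, of n] that unfolding admissible_def dsel_def by (metis someI)
  define c1 where "c1 = Min (insert 1 ((\<lambda>n. real n / real (dsel n) powr \<alpha>) ` {n. n < N0 \<and> admissible n}))"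
  have "real n / real (dsel n) powr \<alpha> > 0" if "admissible n" for n
  proof -
    have "dsel n \<ge> 1" using dsel[OF that] by (simp add: good_distance_def forbidden_def)
    then show ?thesis using that by (simp add: admissible_def)
  qed
  then have c1_pos: "c1 > 0" unfolding c1_def by (subst Min_gr_iff) auto
  have c1_le: "c1 \<le> real n / real (dsel n) powr \<alpha>" if "n < N0" "admissible n" for n
    unfolding c1_def using that by (intro Min_le) auto
  define c where "c = min c1 (c2 / 4)"
  have "c > 0" using c1_pos c2 by (simp add: c_def)
  moreover have "\<exists>D. finite D \<and> (\<forall>d\<in>D. good_distance \<phi> n d) \<and> c / real n \<le> (\<Sum>d\<in>D. 1 / real d powr \<alpha>)"
    if n: "admissible n" for n
  proof (cases "n < N0")
    case True
    have "c \<le> real n / real (dsel n) powr \<alpha>" using c1_le[OF True n] by (simp add: c_def min.coboundedI1)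
    then have "c / real n \<le> 1 / real (dsel n) powr \<alpha>" using n by (simp add: admissible_def field_simps)
    then show ?thesis using dsel[OF n] by (intro exI[of _ "{dsel n}"]) auto
  next
    case False
    then obtain D where D: "D \<subseteq> {n..<2*n}" "\<forall>d\<in>D. good_distance \<phi> n d" "c2 * real n \<le> real (card D)"
      using N0 by (meson not_less)
    have n1: "n \<ge> 1" using n by (simp add: admissible_def)
    have "c / real n \<le> c2 / 4 / real n" unfolding c_def by (intro divide_right_mono) auto
    also have "\<dots> = c2 * real n / (4 * real n ^ 2)" using n1 by (simp add: power2_eq_square)
    also have "\<dots> \<le> real (card D) / (4 * real n ^ 2)" using D(3) by (simp add: divide_right_mono)
    also have "\<dots> \<le> (\<Sum>d\<in>D. 1 / real d powr \<alpha>)" by (rule sum_inverse_powr_dyadic[OF D(1) n1 \<alpha>])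
    finally have "c / real n \<le> (\<Sum>d\<in>D. 1 / real d powr \<alpha>)" .
    moreover have "finite D" using D(1) by (rule finite_subset) simp
    ultimately show ?thesis using D(2) by blast
  qed
  ultimately show ?thesis by (intro that) (auto simp: admissible_def)
qed

section \<open>The Hamiltonian\<close>

lemma two_ones_inj: "n \<ge> 1 \<Longrightarrow> two_ones d = two_ones n \<Longrightarrow> n = d"
proof -
  assume n: "n \<ge> 1" and e: "two_ones d = two_ones n"
  have "two_ones n (int n) = Some 1" by (simp add: two_ones_def)
  then have "two_ones d (int n) = Some 1" using e by simp
  then have "int n = 0 \<or> int n = int d" by (simp add: two_ones_def split: if_splits)
  then show "n = d" using n by auto
qed

lemma two_ones_ne_zeros_pat: "two_ones d \<noteq> zeros_pat m"
proof
  assume "two_ones d = zeros_pat m"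
  then have "two_ones d 0 = zeros_pat m 0" by simp
  then show False by (simp add: two_ones_def zeros_pat_def split: if_splits)
qed

lemma H_alpha_nonneg: "0 \<le> H_alpha \<phi> m \<alpha> p"
  by (simp add: H_alpha_def)

lemma H_alpha_two_ones:
  assumes d: "d \<in> forbidden \<phi>"
  shows "H_alpha \<phi> m \<alpha> (two_ones d) = 1 / real d powr \<alpha>"
proof -
  have "(THE n. n \<in> forbidden \<phi> \<and> two_ones d = two_ones n) = d"
  proof (rule the_equality)
    show "d \<in> forbidden \<phi> \<and> two_ones d = two_ones d" using d by simp
    fix n assume "n \<in> forbidden \<phi> \<and> two_ones d = two_ones n"
    then show "n = d" using two_ones_inj[of n d] by (auto simp: forbidden_def)
  qed
  then show ?thesis using d two_ones_ne_zeros_pat[of d m] unfolding H_alpha_def by auto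
qed

lemma H_alpha_pattern_of_avoiding:
  assumes nz: "no_m_zeros m X" and nf: "no_forbidden_ones \<phi> X"
    and A: "finite A" "A \<noteq> {}"
  shows "H_alpha \<phi> m \<alpha> (pattern_of X A) = 0"
proof -
  have p0: "pattern_of X A 0 = Some (X (Min A))" using A by (simp add: pattern_of_def)
  have nz': "pattern_of X A \<noteq> zeros_pat m"
  proof
    assume e: "pattern_of X A = zeros_pat m"
    have "\<forall>i<m. X (Min A + int i) = 0"
    proof (intro allI impI)
      fix i assume i: "i < m"
      have "pattern_of X A (int i) = Some 0" using e i by (simp add: zeros_pat_def)
      then show "X (Min A + int i) = 0" by (simp add: pattern_of_def add.commute split: if_splits)
    qed
    then show False using nz unfolding no_m_zeros_def by blast
  qed
  have nt: "\<not> (\<exists>n\<in>forbidden \<phi>. pattern_of X A = two_ones n)"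
  proof
    assume "\<exists>n\<in>forbidden \<phi>. pattern_of X A = two_ones n"
    then obtain n where n: "n \<in> forbidden \<phi>" "pattern_of X A = two_ones n" by blast
    have "pattern_of X A 0 = Some 1" using n(2) by (simp add: two_ones_def)
    then have x1: "X (Min A) = 1" using p0 by simp
    have "pattern_of X A (int n) = Some 1" using n(2) by (simp add: two_ones_def)
    then have x2: "X (Min A + int n) = 1" by (simp add: pattern_of_def add.commute split: if_splits)
    show False using nf n(1) x1 x2 by (auto simp: no_forbidden_ones_def)
  qed
  show ?thesis using nz' nt by (simp add: H_alpha_def)
qed

lemma seg_energy_H_alpha_avoiding:
  assumes "no_m_zeros m Y" and "no_forbidden_ones \<phi> Y"
  shows "seg_energy (H_alpha \<phi> m \<alpha>) Y k = 0"
  unfolding seg_energy_eq_sum_supports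
  by (rule sum.neutral) (auto simp: segment_supports_def intro!: H_alpha_pattern_of_avoiding[OF assms] intro: finite_subset)

lemma pattern_of_pair:
  assumes "W t = 1" "W (t + int d) = 1" "d \<ge> 1"
  shows "pattern_of W {t, t + int d} = two_ones d"
proof
  fix i
  have m: "Min {t, t + int d} = t" by simp
  show "pattern_of W {t, t + int d} i = two_ones d i"
    using assms unfolding pattern_of_def m two_ones_def by (auto simp: add.commute)
qed

definition pair_count :: "(int \<Rightarrow> nat) \<Rightarrow> nat \<Rightarrow> nat \<Rightarrow> nat" where
  "pair_count W d k = card {t\<in>{- int k..int k}. t + int d \<in> {- int k..int k} \<and> W t = 1 \<and> W (t + int d) = 1}"

lemma seg_energy_ge_pairs:
  assumes fin: "finite Dn" and DF: "Dn \<subseteq> forbidden \<phi>"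
  shows "(\<Sum>d\<in>Dn. 1 / real d powr \<alpha> * real (pair_count W d k))
         \<le> seg_energy (H_alpha \<phi> m \<alpha>) W k"
proof -
  define Q where "Q d = {t\<in>{- int k..int k}. t + int d \<in> {- int k..int k} \<and> W t = 1 \<and> W (t + int d) = 1}" for d
  define Pairs where "Pairs = Sigma Dn Q"
  define f where "f = (\<lambda>(d::nat, t::int). {t, t + int d})"
  have d1: "d \<ge> 1" if "d \<in> Dn" for d using DF that by (auto simp: forbidden_def)
  have finQ: "finite (Q d)" for d unfolding Q_def by (rule finite_subset[of _ "{- int k..int k}"]) auto
  have inj: "inj_on f Pairs"
  proof (rule inj_onI)
    fix a b assume a: "a \<in> Pairs" and b: "b \<in> Pairs" and e: "f a = f b"
    obtain d t where a': "a = (d, t)" by (cases a)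
    obtain d' t' where b': "b = (d', t')" by (cases b)
    have e': "{t, t + int d} = {t', t' + int d'}" using e by (simp add: f_def a' b')
    have "Min {t, t + int d} = Min {t', t' + int d'}" using e' by simp
    then have tt: "t = t'" by simp
    have "Max {t, t + int d} = Max {t', t' + int d'}" using e' by simp
    then have "t + int d = t' + int d'" by simp
    then show "a = b" using tt by (simp add: a' b')
  qed
  have sub: "f ` Pairs \<subseteq> segment_supports k"
    by (auto simp: f_def Pairs_def Q_def segment_supports_def)
  have "(\<Sum>d\<in>Dn. 1 / real d powr \<alpha> * real (card (Q d))) = (\<Sum>d\<in>Dn. \<Sum>t\<in>Q d. 1 / real d powr \<alpha>)" by simp
  also have "\<dots> = (\<Sum>(d, t)\<in>Pairs. 1 / real d powr \<alpha>)" unfolding Pairs_def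
    by (rule sum.Sigma) (use fin finQ in auto)
  also have "\<dots> = (\<Sum>(d, t)\<in>Pairs. H_alpha \<phi> m \<alpha> (pattern_of W (f (d, t))))"
  proof (rule sum.cong[OF refl])
    fix x assume x: "x \<in> Pairs"
    obtain d t where x': "x = (d, t)" by (cases x)
    have "d \<in> Dn" "W t = 1" "W (t + int d) = 1" using x unfolding x' Pairs_def Q_def by auto
    then show "(case x of (d, t) \<Rightarrow> 1 / real d powr \<alpha>)
        = (case x of (d, t) \<Rightarrow> H_alpha \<phi> m \<alpha> (pattern_of W (f (d, t))))"
      unfolding x' f_def using pattern_of_pair[of W t d] d1 H_alpha_two_ones[of d \<phi> m \<alpha>] DF by auto
  qed
  also have "\<dots> = (\<Sum>A\<in>f ` Pairs. H_alpha \<phi> m \<alpha> (pattern_of W A))"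
    using sum.reindex[OF inj, of "\<lambda>A. H_alpha \<phi> m \<alpha> (pattern_of W A)"] by (simp add: case_prod_unfold)
  also have "\<dots> \<le> (\<Sum>A\<in>segment_supports k. H_alpha \<phi> m \<alpha> (pattern_of W A))"
    by (rule sum_mono2[OF finite_segment_supports sub]) (rule H_alpha_nonneg)
  also have "\<dots> = seg_energy (H_alpha \<phi> m \<alpha>) W k" by (simp add: seg_energy_eq_sum_supports)
  finally show ?thesis by (simp add: Q_def pair_count_def)
qed

lemma card_window_shift_le:
  fixes Q :: "int \<Rightarrow> bool"
  shows "card {t\<in>{- int k..int k}. Q t} \<le> card {t\<in>{- int k..int k}. t + int d \<in> {- int k..int k} \<and> Q t} + d"
proof -
  have "{t\<in>{- int k..int k}. Q t} \<subseteq> {t\<in>{- int k..int k}. t + int d \<in> {- int k..int k} \<and> Q t} \<union> {int k - int d + 1 .. int k}"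
    by auto
  then have "card {t\<in>{- int k..int k}. Q t} \<le> card ({t\<in>{- int k..int k}. t + int d \<in> {- int k..int k} \<and> Q t} \<union> {int k - int d + 1 .. int k})"
    by (rule card_mono[rotated]) (auto intro: finite_subset[of _ "{- int k..int k}"])
  also have "\<dots> \<le> card {t\<in>{- int k..int k}. t + int d \<in> {- int k..int k} \<and> Q t} + card {int k - int d + 1 .. int k}"
    by (rule card_Un_le)
  finally show ?thesis by simp
qed

lemma sturmian_pairs_at_distance:
  fixes \<psi> x :: real and d :: nat
  assumes \<psi>: "0 < \<psi>" "\<psi> < 1"
    and W: "\<And>j. frac (x + of_int j * \<psi>) \<notin> {0, \<psi>} \<Longrightarrow> W j = rotation_coding \<psi> (x + of_int j * \<psi>)"
    and e: "frac (real d * \<psi>) \<le> (1 - \<psi>) / 2"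
  shows "(\<Sum>t\<in>{- int k..int k}. of_bool (frac (x + of_int t * \<psi>) \<in> {\<psi> + (1 - \<psi>) / 8..<\<psi> + (1 - \<psi>) / 2})) - real d
         \<le> real (pair_count W d k)"
proof -
  define I where "I = {\<psi> + (1 - \<psi>) / 8..<\<psi> + (1 - \<psi>) / 2}"
  define L where "L = (1 - \<psi>) / 2"
  have L: "L > 0" "\<psi> + L + L = 1" using \<psi> by (auto simp: L_def)
  have imp: "W t = 1 \<and> W (t + int d) = 1" if t: "frac (x + of_int t * \<psi>) \<in> I" for t
  proof -
    define u where "u = frac (x + of_int t * \<psi>)"
    have u: "\<psi> < u" "u < \<psi> + L" using t L \<psi> by (auto simp: I_def u_def L_def)
    have "u \<notin> {0, \<psi>}" using u \<psi> by auto
    then have ne: "frac (x + of_int t * \<psi>) \<notin> {0, \<psi>}" unfolding u_def .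
    have nl: "\<not> frac (x + of_int t * \<psi>) < \<psi>" using u unfolding u_def by simp
    have W1: "W t = 1" using W[OF ne] nl by (simp add: rotation_coding_def)
    define v where "v = frac (real d * \<psi>)"
    have v: "0 \<le> v" "v \<le> L" using e by (auto simp: v_def L_def)
    have eq: "x + of_int (t + int d) * \<psi> = (x + of_int t * \<psi>) + real d * \<psi>" by (simp add: algebra_simps)
    have "frac (x + of_int (t + int d) * \<psi>) = frac ((x + of_int t * \<psi>) + real d * \<psi>)"
      by (rule arg_cong[where f=frac]) (rule eq)
    also have "\<dots> = (if u + v < 1 then u + v else u + v - 1)" unfolding u_def v_def by (rule frac_add)
    also have "\<dots> = u + v" using u v L by simp
    finally have f2: "frac (x + of_int (t + int d) * \<psi>) = u + v" .
    have ne2: "frac (x + of_int (t + int d) * \<psi>) \<notin> {0, \<psi>}" unfolding f2 using u v \<psi> by auto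
    have nl2: "\<not> frac (x + of_int (t + int d) * \<psi>) < \<psi>" using u v f2 by simp
    have "W (t + int d) = 1" using W[OF ne2] nl2 by (simp add: rotation_coding_def)
    then show ?thesis using W1 by simp
  qed
  have "(\<Sum>t\<in>{- int k..int k}. of_bool (frac (x + of_int t * \<psi>) \<in> I)) = real (card {t\<in>{- int k..int k}. frac (x + of_int t * \<psi>) \<in> I})"
  proof -
    have "{t\<in>{- int k..int k}. frac (x + of_int t * \<psi>) \<in> I} = {- int k..int k} \<inter> {t. frac (x + of_int t * \<psi>) \<in> I}"
      by auto
    then show ?thesis by simp
  qed
  also have "card {t\<in>{- int k..int k}. frac (x + of_int t * \<psi>) \<in> I} \<le> card {t\<in>{- int k..int k}. t + int d \<in> {- int k..int k} \<and> frac (x + of_int t * \<psi>) \<in> I} + d"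
    by (rule card_window_shift_le)
  also have "card {t\<in>{- int k..int k}. t + int d \<in> {- int k..int k} \<and> frac (x + of_int t * \<psi>) \<in> I} \<le> pair_count W d k"
    unfolding pair_count_def using imp by (intro card_mono) (auto intro: finite_subset[of _ "{- int k..int k}"])
  finally show ?thesis unfolding I_def by simp
qed

section \<open>Energy densities\<close>

text \<open>A real-valued substitute for \<open>L \<le> liminf g k / (2 k + 1)\<close> that adds up without
  extended-real arithmetic.\<close>

definition density_at_least :: "(nat \<Rightarrow> real) \<Rightarrow> real \<Rightarrow> bool" where
  "density_at_least g L \<longleftrightarrow> (\<exists>f. (\<forall>k. f k \<le> g k) \<and> (\<lambda>k. f k / (2 * real k + 1)) \<longlonglongrightarrow> L)"

lemma density_at_least_tendsto:
  "(\<lambda>k. g k / (2 * real k + 1)) \<longlonglongrightarrow> L \<Longrightarrow> density_at_least g L"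
  unfolding density_at_least_def by blast

lemma density_at_least_add:
  assumes "density_at_least g L" and "density_at_least h M"
  shows "density_at_least (\<lambda>k. g k + h k) (L + M)"
proof -
  obtain f f' where f: "\<And>k. f k \<le> g k" "(\<lambda>k. f k / (2 * real k + 1)) \<longlonglongrightarrow> L"
    and f': "\<And>k. f' k \<le> h k" "(\<lambda>k. f' k / (2 * real k + 1)) \<longlonglongrightarrow> M"
    using assms unfolding density_at_least_def by blast
  have "(\<lambda>k. (f k + f' k) / (2 * real k + 1)) \<longlonglongrightarrow> L + M"
    using tendsto_add[OF f(2) f'(2)] by (simp add: add_divide_distrib)
  then show ?thesis unfolding density_at_least_def using f(1) f'(1)
    by (intro exI[of _ "\<lambda>k. f k + f' k"]) (auto intro: add_mono)
qed

lemma density_at_least_sum: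
  assumes "finite I" and "\<And>i. i \<in> I \<Longrightarrow> density_at_least (g i) (L i)"
  shows "density_at_least (\<lambda>k. \<Sum>i\<in>I. g i k) (\<Sum>i\<in>I. L i)"
  using assms
proof (induction I rule: finite_induct)
  case empty
  show ?case by (rule density_at_least_tendsto) simp
next
  case (insert i I)
  then show ?case by (simp add: density_at_least_add)
qed

lemma density_at_least_mono:
  assumes "density_at_least g L" and "\<And>k. g k \<le> h k" and "L' \<le> L"
  shows "density_at_least h L'"
proof -
  obtain f where f: "\<And>k. f k \<le> g k" "(\<lambda>k. f k / (2 * real k + 1)) \<longlonglongrightarrow> L"
    using assms(1) unfolding density_at_least_def by blast
  have "(\<lambda>k. f k / (2 * real k + 1) - (L - L')) \<longlonglongrightarrow> L - (L - L')"
    by (intro tendsto_diff f(2) tendsto_const)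
  moreover have "f k / (2 * real k + 1) - (L - L') = (f k - (L - L') * (2 * real k + 1)) / (2 * real k + 1)" for k
    by (simp add: field_simps)
  moreover have "f k - (L - L') * (2 * real k + 1) \<le> h k" for k
  proof -
    have "0 \<le> (L - L') * (2 * real k + 1)" using assms(3) by simp
    then show ?thesis using f(1)[of k] assms(2)[of k] by linarith
  qed
  ultimately show ?thesis unfolding density_at_least_def
    by (intro exI[of _ "\<lambda>k. f k - (L - L') * (2 * real k + 1)"]) auto
qed

lemma density_at_least_scale:
  assumes "density_at_least g L" and "c \<ge> 0"
  shows "density_at_least (\<lambda>k. c * g k) (c * L)"
proof -
  obtain f where f: "\<And>k. f k \<le> g k" "(\<lambda>k. f k / (2 * real k + 1)) \<longlonglongrightarrow> L"
    using assms(1) unfolding density_at_least_def by blast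
  have "(\<lambda>k. c * f k / (2 * real k + 1)) \<longlonglongrightarrow> c * L"
    using tendsto_mult_left[OF f(2), of c] by simp
  then show ?thesis unfolding density_at_least_def using f(1) assms(2)
    by (intro exI[of _ "\<lambda>k. c * f k"]) (auto intro: mult_left_mono)
qed

lemma energy_density_ge:
  assumes "density_at_least (seg_energy \<Phi> Y) L"
  shows "ereal L \<le> energy_density \<Phi> Y"
proof -
  obtain f where f: "\<And>k. f k \<le> seg_energy \<Phi> Y k" "(\<lambda>k. f k / (2 * real k + 1)) \<longlonglongrightarrow> L"
    using assms unfolding density_at_least_def by blast
  have "ereal L = Liminf sequentially (\<lambda>k. ereal (f k / (2 * real k + 1)))"
    using lim_imp_Liminf[OF _ tendsto_ereal[OF f(2)]] by simp
  also have "\<dots> \<le> energy_density \<Phi> Y"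
    unfolding energy_density_def using f(1)
    by (intro Liminf_mono always_eventually allI) (simp add: divide_right_mono add_pos_nonneg)
  finally show ?thesis .
qed

lemma energy_density_eq:
  assumes "(\<lambda>k. seg_energy \<Phi> Y k / (2 * real k + 1)) \<longlonglongrightarrow> L"
  shows "energy_density \<Phi> Y = ereal L"
  unfolding energy_density_def using lim_imp_Liminf[OF _ tendsto_ereal[OF assms]] by simp

lemma energy_density_sturmian_ground:
  fixes \<Phi> :: "pattern \<Rightarrow> real"
  assumes irr: "\<phi> \<notin> \<rat>" and X: "sturmian \<phi> X" and avoid: "no_m_zeros m X" "no_forbidden_ones \<phi> X"
    and P: "finite P" and out: "\<And>q. q \<notin> P \<Longrightarrow> \<Phi> q = H_alpha \<phi> m \<alpha> q"
  shows "energy_density \<Phi> X = ereal (\<Sum>p\<in>P. (\<Phi> p - H_alpha \<phi> m \<alpha> p) * pattern_frequency \<phi> p)"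
proof (rule energy_density_eq)
  have eq: "seg_energy \<Phi> X k / (2 * real k + 1)
      = (\<Sum>p\<in>P. (\<Phi> p - H_alpha \<phi> m \<alpha> p) * (real (occurrences X p k) / (2 * real k + 1)))" for k
    using seg_energy_perturbation[OF P out, where Y = X and k = k] seg_energy_H_alpha_avoiding[OF avoid]
    by (simp add: sum_divide_distrib)
  then show "(\<lambda>k. seg_energy \<Phi> X k / (2 * real k + 1))
      \<longlonglongrightarrow> (\<Sum>p\<in>P. (\<Phi> p - H_alpha \<phi> m \<alpha> p) * pattern_frequency \<phi> p)"
    unfolding eq by (intro tendsto_sum tendsto_mult_left sturmian_occurrence_frequency[OF irr X])
qed

lemma density_at_least_pair_count:
  assumes irr: "\<psi> \<notin> \<rat>" and \<psi>: "0 < \<psi>" "\<psi> < 1" and W: "sturmian \<psi> W"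
    and d: "frac (real d * \<psi>) \<le> (1 - \<psi>) / 2"
  shows "density_at_least (\<lambda>k. real (pair_count W d k)) (3 * (1 - \<psi>) / 8)"
proof -
  obtain x where x: "\<And>j. frac (x + of_int j * \<psi>) \<notin> {0, \<psi>} \<Longrightarrow> W j = rotation_coding \<psi> (x + of_int j * \<psi>)"
    using sturmian_rotation_coding[OF W] by blast
  let ?I = "{\<psi> + (1 - \<psi>) / 8..<\<psi> + (1 - \<psi>) / 2}"
  let ?f = "\<lambda>k. (\<Sum>t\<in>{- int k..int k}. of_bool (frac (x + of_int t * \<psi>) \<in> ?I)) - real d"
  have e: "(\<psi> + (1 - \<psi>) / 2) - (\<psi> + (1 - \<psi>) / 8) = 3 * (1 - \<psi>) / 8" by linarith
  have "window_mean (\<lambda>t. of_bool (frac (x + of_int t * \<psi>) \<in> ?I))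
      \<longlonglongrightarrow> (\<psi> + (1 - \<psi>) / 2) - (\<psi> + (1 - \<psi>) / 8)"
    by (rule window_mean_rotation_interval[OF irr]) (use \<psi> in \<open>auto simp: field_simps\<close>)
  then have "(\<lambda>k. window_mean (\<lambda>t. of_bool (frac (x + of_int t * \<psi>) \<in> ?I)) k - real d / (2 * real k + 1))
      \<longlonglongrightarrow> 3 * (1 - \<psi>) / 8 - 0"
    unfolding e by (intro tendsto_diff tendsto_const_divide_window)
  then have lim: "(\<lambda>k. ?f k / (2 * real k + 1)) \<longlonglongrightarrow> 3 * (1 - \<psi>) / 8"
    by (simp add: window_mean_def diff_divide_distrib)
  have le: "?f k \<le> real (pair_count W d k)" for k
    by (rule sturmian_pairs_at_distance[OF \<psi> x d])
  show ?thesis unfolding density_at_least_def using le lim by (intro exI[of _ ?f]) blast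
qed

lemma density_at_least_occurrences_slope_change:
  fixes \<phi> \<delta> :: real and n :: nat
  defines "\<psi> \<equiv> \<phi> - 1 / real n"
  assumes irr: "\<psi> \<notin> \<rat>" and n: "n > 0" and W: "sturmian \<psi> W" and v: "normalized_pattern p"
  shows "density_at_least (\<lambda>k. \<delta> * real (occurrences W p k))
    (\<delta> * pattern_frequency \<phi> p - \<bar>\<delta>\<bar> * slope_change_error_limit p n)"
proof -
  obtain x where x: "\<And>j. frac (x + of_int j * \<psi>) \<notin> {0, \<psi>} \<Longrightarrow> W j = rotation_coding \<psi> (x + of_int j * \<psi>)"
    using sturmian_rotation_coding[OF W] by blast
  define G :: "nat \<Rightarrow> real" where "G k = (\<Sum>t\<in>{- int k..int k}. of_bool (matches_coding p \<phi> (x + of_int t * \<psi>)))" for k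
  define E :: "nat \<Rightarrow> real" where "E k = (\<Sum>t\<in>{- int k..int k}. slope_change_error p \<phi> n (x + of_int t * \<psi>))" for k
  define K where "K = real (pattern_length p) + 2 * real (card (pattern_domain p))"
  have "(\<lambda>k. \<delta> * (G k / (2 * real k + 1)) - \<bar>\<delta>\<bar> * (E k / (2 * real k + 1) + K / (2 * real k + 1)))
      \<longlonglongrightarrow> \<delta> * pattern_frequency \<phi> p - \<bar>\<delta>\<bar> * (slope_change_error_limit p n + 0)"
    using window_mean_matches_coding[OF v irr] window_mean_slope_change_error[OF irr v n]
    unfolding G_def E_def window_mean_def
    by (intro tendsto_diff tendsto_mult_left tendsto_add tendsto_const_divide_window)
  moreover have "\<delta> * (G k / (2 * real k + 1)) - \<bar>\<delta>\<bar> * (E k / (2 * real k + 1) + K / (2 * real k + 1))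
      = (\<delta> * G k - \<bar>\<delta>\<bar> * (E k + K)) / (2 * real k + 1)" for k
    by (simp add: add_divide_distrib diff_divide_distrib algebra_simps)
  moreover have "\<delta> * G k - \<bar>\<delta>\<bar> * (E k + K) \<le> \<delta> * real (occurrences W p k)" for k
  proof -
    have "\<bar>real (occurrences W p k) - G k\<bar> \<le> E k + K"
      unfolding G_def E_def K_def using occurrences_slope_change[OF irr[unfolded \<psi>_def] v n x[unfolded \<psi>_def]]
      by (simp add: \<psi>_def)
    then have "\<bar>\<delta> * (real (occurrences W p k) - G k)\<bar> \<le> \<bar>\<delta>\<bar> * (E k + K)"
      by (simp add: abs_mult mult_left_mono)
    then show ?thesis by (simp add: abs_le_iff algebra_simps)
  qed
  ultimately show ?thesis unfolding density_at_least_def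
    by (intro exI[of _ "\<lambda>k. \<delta> * G k - \<bar>\<delta>\<bar> * (E k + K)"]) auto
qed

lemma slope_change_error_limit_nonneg:
  "normalized_pattern p \<Longrightarrow> 0 \<le> slope_change_error_limit p n"
  unfolding slope_change_error_limit_def normalized_pattern_def by (intro sum_nonneg) auto

lemma density_at_least_perturbation_slope_change:
  fixes \<phi> \<delta> lam :: real and n :: nat
  defines "\<psi> \<equiv> \<phi> - 1 / real n"
  assumes irr: "\<psi> \<notin> \<rat>" and n: "n > 0" and W: "sturmian \<psi> W" and \<delta>: "\<bar>\<delta>\<bar> \<le> lam"
  shows "density_at_least (\<lambda>k. \<delta> * real (occurrences W p k))
    (\<delta> * pattern_frequency \<phi> p - lam * (6 * real (pattern_size p)) / real n)"
proof (cases "normalized_pattern p")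
  case True
  have "\<bar>\<delta>\<bar> * slope_change_error_limit p n \<le> lam * slope_change_error_limit p n"
    using \<delta> slope_change_error_limit_nonneg[OF True] by (rule mult_right_mono)
  also have "\<dots> \<le> lam * (6 * real (pattern_size p) / real n)"
    using slope_change_error_limit_le[OF True n] \<delta> by (intro mult_left_mono) auto
  finally have bound: "\<bar>\<delta>\<bar> * slope_change_error_limit p n
      \<le> lam * (6 * real (pattern_size p)) / real n"
    by simp
  have "density_at_least (\<lambda>k. \<delta> * real (occurrences W p k))
      (\<delta> * pattern_frequency \<phi> p - \<bar>\<delta>\<bar> * slope_change_error_limit p n)"
    using density_at_least_occurrences_slope_change[OF irr[unfolded \<psi>_def] n W[unfolded \<psi>_def] True] .
  then show ?thesis by (rule density_at_least_mono) (use bound in auto)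
next
  case False
  have "density_at_least (\<lambda>k. \<delta> * real (occurrences W p k)) 0"
    using False by (intro density_at_least_tendsto) (simp add: occurrences_not_normalized)
  moreover have "0 \<le> lam * (6 * real (pattern_size p)) / real n"
    using \<delta> by simp
  ultimately show ?thesis
    by (elim density_at_least_mono) (simp_all add: pattern_frequency_def False)
qed

lemma density_at_least_pair_energy:
  fixes \<phi> \<alpha> :: real and m n :: nat
  defines "\<psi> \<equiv> \<phi> - 1 / real n"
  assumes irr: "\<psi> \<notin> \<rat>" and \<psi>: "0 < \<psi>" "\<psi> < 1" "\<psi> \<le> \<phi>" and W: "sturmian \<psi> W"
    and D: "finite D" "\<And>d. d \<in> D \<Longrightarrow> good_distance \<phi> n d"
  shows "density_at_least (seg_energy (H_alpha \<phi> m \<alpha>) W) ((\<Sum>d\<in>D. 1 / real d powr \<alpha>) * (3 * (1 - \<phi>) / 8))"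
proof -
  have "density_at_least (\<lambda>k. real (pair_count W d k)) (3 * (1 - \<psi>) / 8)" if "d \<in> D" for d
  proof (rule density_at_least_pair_count[OF irr \<psi>(1,2) W])
    have "frac (real d * \<psi>) \<le> (1 - \<phi>) / 2" using D(2)[OF that] by (simp add: good_distance_def \<psi>_def)
    also have "\<dots> \<le> (1 - \<psi>) / 2" using \<psi>(3) by simp
    finally show "frac (real d * \<psi>) \<le> (1 - \<psi>) / 2" .
  qed
  then have "density_at_least (\<lambda>k. \<Sum>d\<in>D. 1 / real d powr \<alpha> * real (pair_count W d k))
      (\<Sum>d\<in>D. 1 / real d powr \<alpha> * (3 * (1 - \<psi>) / 8))"
    using D(1) by (intro density_at_least_sum density_at_least_scale) auto
  moreover have "D \<subseteq> forbidden \<phi>" using D(2) by (auto simp: good_distance_def)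
  then have "(\<Sum>d\<in>D. 1 / real d powr \<alpha> * real (pair_count W d k)) \<le> seg_energy (H_alpha \<phi> m \<alpha>) W k" for k
    by (rule seg_energy_ge_pairs[OF D(1)])
  moreover have "(\<Sum>d\<in>D. 1 / real d powr \<alpha>) * (3 * (1 - \<phi>) / 8)
      \<le> (\<Sum>d\<in>D. 1 / real d powr \<alpha> * (3 * (1 - \<psi>) / 8))"
    unfolding sum_distrib_right using \<psi> by (intro sum_mono mult_left_mono) auto
  ultimately show ?thesis by (rule density_at_least_mono)
qed

text \<open>The pairs of \<open>1\<close>'s at the distances in \<open>D\<close> cost at least \<open>3 (1 - \<phi>) c / (8 n)\<close> per
  site, which pays for the error \<open>O(lam / n)\<close> in the perturbed pattern energies.\<close>

lemma energy_density_perturbed_slope: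
  fixes \<phi> \<alpha> lam c :: real and m n :: nat and \<Phi> :: "pattern \<Rightarrow> real"
  defines "\<psi> \<equiv> \<phi> - 1 / real n" and "H \<equiv> H_alpha \<phi> m \<alpha>"
  assumes irr: "\<phi> \<notin> \<rat>" and ph: "\<phi> < 1" and n: "n \<ge> 1" "\<psi> > 0" and W: "sturmian \<psi> W"
    and P: "finite P" and pert: "perturbation lam P H \<Phi>"
    and D: "finite D" "\<And>d. d \<in> D \<Longrightarrow> good_distance \<phi> n d"
    and weight: "c / real n \<le> (\<Sum>d\<in>D. 1 / real d powr \<alpha>)"
    and margin: "lam * (\<Sum>p\<in>P. 6 * real (pattern_size p)) \<le> 3 * (1 - \<phi>) / 8 * c"
  shows "ereal (\<Sum>p\<in>P. (\<Phi> p - H p) * pattern_frequency \<phi> p) \<le> energy_density \<Phi> W"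
proof -
  have "1 / real n > 0" using n by simp
  then have \<psi>: "\<psi> < 1" "\<psi> \<le> \<phi>" using ph unfolding \<psi>_def by linarith+
  have irr\<psi>: "\<psi> \<notin> \<rat>"
  proof
    assume "\<psi> \<in> \<rat>"
    then have "\<psi> + 1 / real n \<in> \<rat>" by simp
    then show False using irr by (simp add: \<psi>_def)
  qed
  have out: "\<And>q. q \<notin> P \<Longrightarrow> \<Phi> q = H q" and close: "\<And>p. p \<in> P \<Longrightarrow> \<bar>\<Phi> p - H p\<bar> \<le> lam"
    using pert by (auto simp: perturbation_def abs_minus_commute less_imp_le)
  have "density_at_least (\<lambda>k. \<Sum>p\<in>P. (\<Phi> p - H p) * real (occurrences W p k))
      (\<Sum>p\<in>P. (\<Phi> p - H p) * pattern_frequency \<phi> p - lam * (6 * real (pattern_size p)) / real n)"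
    using P close n irr\<psi> W unfolding \<psi>_def
    by (intro density_at_least_sum density_at_least_perturbation_slope_change) auto
  moreover have "seg_energy \<Phi> W = (\<lambda>k. seg_energy H W k + (\<Sum>p\<in>P. (\<Phi> p - H p) * real (occurrences W p k)))"
    using P out by (intro ext seg_energy_perturbation)
  ultimately have "density_at_least (seg_energy \<Phi> W)
      ((\<Sum>d\<in>D. 1 / real d powr \<alpha>) * (3 * (1 - \<phi>) / 8)
        + (\<Sum>p\<in>P. (\<Phi> p - H p) * pattern_frequency \<phi> p - lam * (6 * real (pattern_size p)) / real n))"
    using density_at_least_pair_energy[OF irr\<psi>[unfolded \<psi>_def] n(2)[unfolded \<psi>_def] \<psi>[unfolded \<psi>_def]
        W[unfolded \<psi>_def] D] unfolding H_def by (simp add: density_at_least_add)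
  moreover have "lam * (\<Sum>p\<in>P. 6 * real (pattern_size p)) / real n \<le> 3 * (1 - \<phi>) / 8 * c / real n"
    using margin by (rule divide_right_mono) simp
  moreover have "3 * (1 - \<phi>) / 8 * c / real n \<le> (\<Sum>d\<in>D. 1 / real d powr \<alpha>) * (3 * (1 - \<phi>) / 8)"
  proof -
    have "3 * (1 - \<phi>) / 8 * (c / real n) \<le> 3 * (1 - \<phi>) / 8 * (\<Sum>d\<in>D. 1 / real d powr \<alpha>)"
      using weight ph by (intro mult_left_mono) auto
    then show ?thesis by (simp add: ac_simps)
  qed
  ultimately show ?thesis
    by (intro energy_density_ge) (elim density_at_least_mono, auto simp: sum_subtractf sum_divide_distrib[symmetric] sum_distrib_left[symmetric])
qed

theorem theorem4p8:
  fixes \<phi> \<alpha> :: real and m :: nat and X :: "int \<Rightarrow> nat"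
  assumes "\<phi> \<notin> \<rat>" and "1/2 < \<phi>" and "\<phi> < 1"
    and "1 < \<alpha>" and "\<alpha> \<le> 2"
    and hm: "\<forall>Y::int \<Rightarrow> nat. (range Y \<subseteq> {0, 1} \<and> no_m_zeros m Y \<and> no_forbidden_ones \<phi> Y)
               \<longleftrightarrow> sturmian \<phi> Y"
    and "sturmian \<phi> X"
  shows "\<forall>P :: pattern set. finite P \<longrightarrow>
           (\<exists>lam>0. \<forall>\<Phi>'. perturbation lam P (H_alpha \<phi> m \<alpha>) \<Phi>' \<longrightarrow>
              (\<forall>W. (\<exists>n::nat. n \<ge> 1 \<and> \<phi> - 1 / real n > 0 \<and> sturmian (\<phi> - 1 / real n) W) \<longrightarrow>
                   energy_density \<Phi>' X \<le> energy_density \<Phi>' W))"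
proof (intro allI impI)
  fix P :: "pattern set" assume P: "finite P"
  obtain c where c: "c > 0" and weight: "\<And>n. n \<ge> 1 \<Longrightarrow> \<phi> - 1 / real n > 0 \<Longrightarrow>
      \<exists>D. finite D \<and> (\<forall>d\<in>D. good_distance \<phi> n d) \<and> c / real n \<le> (\<Sum>d\<in>D. 1 / real d powr \<alpha>)"
    using good_distances_weight[OF assms(1-3), of \<alpha>] assms(4,5) by auto
  define K where "K = (\<Sum>p\<in>P. 6 * real (pattern_size p))"
  define lam where "lam = 3 * (1 - \<phi>) / 8 * c / (K + 1)"
  have "K \<ge> 0" by (simp add: K_def sum_nonneg)
  then have lam: "lam > 0" "lam * K \<le> 3 * (1 - \<phi>) / 8 * c" using c assms(3) by (auto simp: lam_def field_simps)
  have avoid: "no_m_zeros m X" "no_forbidden_ones \<phi> X" using hm assms(7) by blast+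
  show "\<exists>lam>0. \<forall>\<Phi>'. perturbation lam P (H_alpha \<phi> m \<alpha>) \<Phi>' \<longrightarrow>
      (\<forall>W. (\<exists>n::nat. n \<ge> 1 \<and> \<phi> - 1 / real n > 0 \<and> sturmian (\<phi> - 1 / real n) W) \<longrightarrow>
        energy_density \<Phi>' X \<le> energy_density \<Phi>' W)"
  proof (intro exI[of _ lam] conjI allI impI, fact lam(1), elim exE conjE)
    fix \<Phi>' W n assume pert: "perturbation lam P (H_alpha \<phi> m \<alpha>) \<Phi>'"
      and n: "n \<ge> 1" "\<phi> - 1 / real n > 0" and W: "sturmian (\<phi> - 1 / real n) W"
    obtain D where D: "finite D" "\<forall>d\<in>D. good_distance \<phi> n d" "c / real n \<le> (\<Sum>d\<in>D. 1 / real d powr \<alpha>)"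
      using weight[OF n] by blast
    have "energy_density \<Phi>' X = ereal (\<Sum>p\<in>P. (\<Phi>' p - H_alpha \<phi> m \<alpha> p) * pattern_frequency \<phi> p)"
      using pert by (intro energy_density_sturmian_ground[OF assms(1,7) avoid P]) (simp add: perturbation_def)
    also have "\<dots> \<le> energy_density \<Phi>' W"
      using D lam(2) unfolding K_def by (intro energy_density_perturbed_slope[OF assms(1,3) n W P pert]) auto
    finally show "energy_density \<Phi>' X \<le> energy_density \<Phi>' W" .
  qed
qed

end
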